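(* The mapping which associates its code to a covered map is a bijection between covered maps with $n$ edges and code-shuffles of length $2n$ (on alphabets $A_k\uplus B_l$ with $k+l=n$). Moreover, if $w$ is the code of the covered map $(M,S)$, then $w_{|A}$ is the code of the unicellular map $M_{|S}$ (on the alphabet $A_{|S|/2}$) and $w_{|B}$ is the code of the dual unicellular map $M^*_{|\bar S}$ (on the alphabet $B_{|\bar S|/2}$).
   Context: Permutations compose right to left. A map is $M=(H,\sigma,\alpha)$, $H$ finite, $\alpha$ fixed-point-free involution, $\sigma$ a permutation, $\langle\sigma,\alpha\rangle$ transitive, with root $r\in H$, considered up to root-preserving relabelling; its face-permutation is $\phi=\sigma\alpha$; unicellular means $\phi$ is cyclic (the empty map counts as unicellular). For $S\subseteq H$, $\pi_{|S}$ is obtained from the cycles of $\pi$ by erasing elements not in $S$. A covered map is $(M,S)$ with $S$ stable by $\alpha$ such that $M_{|S}=(S,\sigma_{|S},\alpha_{|S})$ is a connecting unicellular map ($\sigma_{|S},\alpha_{|S}$ transitive on $S$, $S$ meets every cycle of $\sigma$ — $S=\emptyset$ allowed if $\sigma$ has one cycle — and $\sigma_{|S}\alpha_{|S}$ cyclic). Let $\bar S=H\setminus S$ and $M^*=(H,\phi,\alpha)$; $M^*_{|\bar S}=(\bar S,\phi_{|\bar S},\alpha_{|\bar S})$. The root of $M_{|S}$ is $\sigma^i(r)$ with $i\ge0$ least such that $\sigma^i(r)\in S$; the root of $M^*_{|\bar S}$ is $\phi^j(r)$ with $j\ge0$ least such that $\phi^j(r)\in\bar S$. The motion function is $\theta(h)=\sigma\alpha(h)$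 for $h\in S$ and $\theta(h)=\sigma(h)$ otherwise; it is cyclic when $(M,S)$ is covered. Let $A_n=\{a_1,\bar a_1,\dots,a_n,\bar a_n\}$. A unicellular code on $A_n$ is a word in which each letter of $A_n$ occurs exactly once and, for $1\le i<j\le n$, $a_i$ occurs before $\bar a_i$ and before $a_j$. The code of a unicellular map with $n$ edges is the unique word $w=w_1\cdots w_{2n}$ that is a unicellular code such that after relabelling the half-edges by $A_n$ one has $\alpha(a_i)=\bar a_i$, $\phi=(w_1,\dots,w_{2n})$ and $w_1$ is the root. With $B_l=\{b_1,\bar b_1,\dots,b_l,\bar b_l\}$, a word $w$ on $A_k\uplus B_l$ is a code-shuffle if its subwords $w_{|A}$ and $w_{|B}$ consisting of letters of $A_k$, resp. $B_l$, are unicellular codes. The code of a covered map $(M,S)$ with $k=|S|/2$, $l=|\bar S|/2$ is the unique code-shuffle $w=w_1\cdots w_{2n}$ such that after relabelling the half-edges by $A_k\uplus B_l$ one has $S=A_k$, $\bar S=B_l$, $\alpha(a_i)=\bar a_i$, $\alpha(b_i)=\bar b_i$, $\theta=(w_1,\dots,w_{2n})$ and $w_1$ is the root of $M$. *)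

theory Defs
  imports "HOL-Combinatorics.Permutations"
begin

text \<open>Permutations are functions on the whole type that are bijections of the
half-edge set H and the identity outside (HOL-Combinatorics permutes).
Composition is right to left: the face permutation is phi h = sigma (alpha h).\<close>

definition gen_rel :: "('a \<Rightarrow> 'a) \<Rightarrow> ('a \<Rightarrow> 'a) \<Rightarrow> 'a set \<Rightarrow> ('a \<times> 'a) set" where
  "gen_rel s a H = {(x, s x) | x. x \<in> H} \<union> {(x, a x) | x. x \<in> H}"

text \<open>The group generated by s and a acts transitively on H
(for finite permutations, forward reachability equals the group orbit).\<close>
definition transitive_on :: "('a \<Rightarrow> 'a) \<Rightarrow> ('a \<Rightarrow> 'a) \<Rightarrow> 'a set \<Rightarrow> bool" where
  "transitive_on s a H \<longleftrightarrow> (\<forall>x\<in>H. \<forall>y\<in>H. (x, y) \<in> (gen_rel s a H)\<^sup>*)"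

text \<open>A permutation is cyclic on X (one cycle); the empty set counts as cyclic.\<close>
definition is_cyclic :: "('a \<Rightarrow> 'a) \<Rightarrow> 'a set \<Rightarrow> bool" where
  "is_cyclic p X \<longleftrightarrow> (\<forall>x\<in>X. \<forall>y\<in>X. \<exists>k. (p ^^ k) x = y)"

definition is_map :: "'a set \<Rightarrow> ('a \<Rightarrow> 'a) \<Rightarrow> ('a \<Rightarrow> 'a) \<Rightarrow> 'a \<Rightarrow> bool" where
  "is_map H s a r \<longleftrightarrow> finite H \<and> s permutes H \<and> a permutes H
     \<and> (\<forall>h\<in>H. a h \<noteq> h \<and> a (a h) = h)
     \<and> transitive_on s a H \<and> (H \<noteq> {} \<longrightarrow> r \<in> H)"

text \<open>Restriction pi_{|S}: erase elements not in S from the cycles of pi.\<close>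
definition restr :: "('a \<Rightarrow> 'a) \<Rightarrow> 'a set \<Rightarrow> 'a \<Rightarrow> 'a" where
  "restr p S h = (if h \<in> S then (p ^^ (LEAST k. k > 0 \<and> (p ^^ k) h \<in> S)) h else h)"

definition first_in :: "('a \<Rightarrow> 'a) \<Rightarrow> 'a set \<Rightarrow> 'a \<Rightarrow> 'a" where
  "first_in p S r = (p ^^ (LEAST i. (p ^^ i) r \<in> S)) r"

definition face_perm :: "('a \<Rightarrow> 'a) \<Rightarrow> ('a \<Rightarrow> 'a) \<Rightarrow> 'a \<Rightarrow> 'a" where
  "face_perm s a h = s (a h)"

definition motion :: "('a \<Rightarrow> 'a) \<Rightarrow> ('a \<Rightarrow> 'a) \<Rightarrow> 'a set \<Rightarrow> 'a \<Rightarrow> 'a" where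
  "motion s a S h = (if h \<in> S then s (a h) else s h)"

definition covered_map :: "'a set \<Rightarrow> ('a \<Rightarrow> 'a) \<Rightarrow> ('a \<Rightarrow> 'a) \<Rightarrow> 'a \<Rightarrow> 'a set \<Rightarrow> bool" where
  "covered_map H s a r S \<longleftrightarrow> is_map H s a r \<and> S \<subseteq> H \<and> a ` S \<subseteq> S
     \<and> transitive_on (restr s S) (restr a S) S
     \<and> ((\<forall>h\<in>H. \<exists>k. (s ^^ k) h \<in> S) \<or> (S = {} \<and> is_cyclic s H))
     \<and> is_cyclic (face_perm (restr s S) (restr a S)) S"

definition iso_covered ::
  "'a set \<Rightarrow> ('a \<Rightarrow> 'a) \<Rightarrow> ('a \<Rightarrow> 'a) \<Rightarrow> 'a \<Rightarrow> 'a set \<Rightarrow>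
   'b set \<Rightarrow> ('b \<Rightarrow> 'b) \<Rightarrow> ('b \<Rightarrow> 'b) \<Rightarrow> 'b \<Rightarrow> 'b set \<Rightarrow> bool" where
  "iso_covered H s a r S H' s' a' r' S' \<longleftrightarrow>
     (\<exists>f. bij_betw f H H' \<and> (\<forall>h\<in>H. f (s h) = s' (f h) \<and> f (a h) = a' (f h))
        \<and> f ` S = S' \<and> (H \<noteq> {} \<longrightarrow> f r = r'))"

text \<open>LA i = a_i, LAb i = bar a_i, LB i = b_i, LBb i = bar b_i (indices from 1).\<close>
datatype letter = LA nat | LAb nat | LB nat | LBb nat

fun bar :: "letter \<Rightarrow> letter" where
  "bar (LA i) = LAb i" | "bar (LAb i) = LA i" | "bar (LB i) = LBb i" | "bar (LBb i) = LB i"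

fun isA :: "letter \<Rightarrow> bool" where
  "isA (LA _) = True" | "isA (LAb _) = True" | "isA _ = False"

fun isB :: "letter \<Rightarrow> bool" where
  "isB (LB _) = True" | "isB (LBb _) = True" | "isB _ = False"

definition before :: "letter list \<Rightarrow> letter \<Rightarrow> letter \<Rightarrow> bool" where
  "before w x y \<longleftrightarrow> (\<exists>i j. i < j \<and> j < length w \<and> w ! i = x \<and> w ! j = y)"

definition ucode :: "(nat \<Rightarrow> letter) \<Rightarrow> (nat \<Rightarrow> letter) \<Rightarrow> nat \<Rightarrow> letter list \<Rightarrow> bool" where
  "ucode c cb n w \<longleftrightarrow> distinct w \<and> set w = c ` {1..n} \<union> cb ` {1..n}
     \<and> (\<forall>i\<in>{1..n}. before w (c i) (cb i))
     \<and> (\<forall>i j. 1 \<le> i \<and> i < j \<and> j \<le> n \<longrightarrow> before w (c i) (c j))"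

definition code_shuffle :: "nat \<Rightarrow> nat \<Rightarrow> letter list \<Rightarrow> bool" where
  "code_shuffle k l w \<longleftrightarrow> ucode LA LAb k (filter isA w) \<and> ucode LB LBb l (filter isB w)"

definition umap_code :: "(nat \<Rightarrow> letter) \<Rightarrow> (nat \<Rightarrow> letter) \<Rightarrow>
    'a set \<Rightarrow> ('a \<Rightarrow> 'a) \<Rightarrow> ('a \<Rightarrow> 'a) \<Rightarrow> 'a \<Rightarrow> letter list \<Rightarrow> bool" where
  "umap_code c cb H s a r w \<longleftrightarrow> ucode c cb (card H div 2) w \<and>
     (\<exists>f. bij_betw f H (set w) \<and> (\<forall>h\<in>H. f (a h) = bar (f h))
        \<and> (\<forall>h\<in>H. \<forall>i<length w. f h = w ! i \<longrightarrow> f (face_perm s a h) = w ! (Suc i mod length w))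
        \<and> (H \<noteq> {} \<longrightarrow> f r = w ! 0))"

definition covered_code :: "'a set \<Rightarrow> ('a \<Rightarrow> 'a) \<Rightarrow> ('a \<Rightarrow> 'a) \<Rightarrow> 'a \<Rightarrow> 'a set \<Rightarrow> letter list \<Rightarrow> bool" where
  "covered_code H s a r S w \<longleftrightarrow> code_shuffle (card S div 2) (card (H - S) div 2) w \<and>
     (\<exists>f. bij_betw f H (set w) \<and> (\<forall>h\<in>H. isA (f h) \<longleftrightarrow> h \<in> S)
        \<and> (\<forall>h\<in>H. f (a h) = bar (f h))
        \<and> (\<forall>h\<in>H. \<forall>i<length w. f h = w ! i \<longrightarrow> f (motion s a S h) = w ! (Suc i mod length w))
        \<and> (H \<noteq> {} \<longrightarrow> f r = w ! 0))"

end

theory Submission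
  imports Defs "HOL-Combinatorics.Cycles"
begin

text \<open>The motion function \<theta> of a covered map (M,S) is cyclic, so listing the half-edges
  along \<theta> from the root gives a cyclic word. In it the half-edges of S appear in the order of
  the face of M restricted to S, and the others in the order of the face of the dual map
  restricted to the complement, because restricting \<theta> to S (resp. to its complement) yields
  these face permutations. Labelling each part canonically (the i-th edge to be opened gets
  a_i, resp. b_i) is the only way to turn the word into a code-shuffle. Conversely
  \<sigma> = \<theta> \<circ> \<alpha> on S and \<sigma> = \<theta> off S, so a code determines the map up to relabelling, and
  every code-shuffle is the code of the map whose half-edges are its positions, with the cyclic
  shift as \<theta> and \<alpha> pairing each letter with its bar.\<close>

definition index_of :: "'a list \<Rightarrow> 'a \<Rightarrow> nat" where
  "index_of xs x = (LEAST i. i < length xs \<and> xs ! i = x)"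

lemma index_of_less_length_and_nth:
  assumes "x \<in> set xs"
  shows "index_of xs x < length xs" "xs ! index_of xs x = x"
proof -
  obtain i where i: "i < length xs" "xs ! i = x" using assms by (metis in_set_conv_nth)
  have "index_of xs x < length xs \<and> xs ! index_of xs x = x"
    unfolding index_of_def by (rule LeastI[of _ i]) (use i in auto)
  then show "index_of xs x < length xs" "xs ! index_of xs x = x" by auto
qed

lemma index_of_nth:
  assumes "distinct xs" "i < length xs"
  shows "index_of xs (xs ! i) = i"
  using index_of_less_length_and_nth[of "xs ! i" xs] assms nth_eq_iff_index_eq by (metis nth_mem)

lemma index_of_inj:
  assumes "x \<in> set xs" "y \<in> set xs" "index_of xs x = index_of xs y"
  shows "x = y"
  using index_of_less_length_and_nth assms by metis

lemma before_map_index_of: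
  assumes "x \<in> set xs" "y \<in> set xs" "index_of xs x < index_of xs y"
  shows "before (map f xs) (f x) (f y)"
  unfolding before_def using assms index_of_less_length_and_nth[of x xs] index_of_less_length_and_nth[of y xs]
  by (intro exI[of _ "index_of xs x"] exI[of _ "index_of xs y"]) auto

lemma index_of_less_if_before_map:
  assumes "distinct xs" "inj_on g (set xs)" "u \<in> set xs" "v \<in> set xs"
    and "before (map g xs) (g u) (g v)"
  shows "index_of xs u < index_of xs v"
proof -
  obtain i j where ij: "i < j" "j < length xs" "g (xs ! i) = g u" "g (xs ! j) = g v"
    using assms(5) by (auto simp: before_def)
  then have "xs ! i = u" "xs ! j = v" using assms(2-4) by (auto simp: inj_on_def)
  then show ?thesis using index_of_nth[OF assms(1)] ij by auto
qed

section \<open>The unicellular code of a list with a fixed-point-free involution\<close>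

definition fpf_involution_on :: "('a \<Rightarrow> 'a) \<Rightarrow> 'a set \<Rightarrow> bool" where
  "fpf_involution_on \<alpha> X \<longleftrightarrow> (\<forall>x\<in>X. \<alpha> x \<in> X \<and> \<alpha> x \<noteq> x \<and> \<alpha> (\<alpha> x) = x)"

definition opening_rank :: "'a list \<Rightarrow> ('a \<Rightarrow> 'a) \<Rightarrow> 'a \<Rightarrow> nat" where
  "opening_rank xs \<alpha> x =
     card {y \<in> set xs. index_of xs y \<le> index_of xs x \<and> index_of xs y < index_of xs (\<alpha> y)}"

text \<open>Reading xs as the face of a unicellular map with edges given by \<alpha>, the i-th edge to
  be opened gets the letter c i at its first and cb i at its second occurrence; this is the
  only labelling turning xs into a unicellular code (canonical_label_unique).\<close>
definition canonical_label ::
    "(nat \<Rightarrow> letter) \<Rightarrow> (nat \<Rightarrow> letter) \<Rightarrow> 'a list \<Rightarrow> ('a \<Rightarrow> 'a) \<Rightarrow> 'a \<Rightarrow> letter" where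
  "canonical_label c cb xs \<alpha> x =
     (if index_of xs x < index_of xs (\<alpha> x) then c (opening_rank xs \<alpha> x)
      else cb (opening_rank xs \<alpha> (\<alpha> x)))"

lemma bar_bar [simp]: "bar (bar x) = x" by (cases x) auto
lemma bar_neq: "bar x \<noteq> x" by (cases x) auto
lemma isA_bar [simp]: "isA (bar x) = isA x" by (cases x) auto
lemma isB_iff_not_isA: "isB x \<longleftrightarrow> \<not> isA x" by (cases x) auto

locale alphabet =
  fixes c cb :: "nat \<Rightarrow> letter"
  assumes inj_c: "inj c" and inj_cb: "inj cb" and c_neq_cb: "c i \<noteq> cb j"
    and bar_c: "bar (c i) = cb i" and bar_cb: "bar (cb i) = c i"

lemma alphabet_A: "alphabet LA LAb" by (auto simp: alphabet_def inj_def)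
lemma alphabet_B: "alphabet LB LBb" by (auto simp: alphabet_def inj_def)

context alphabet begin

lemma ucode_length:
  assumes "ucode c cb n w" shows "length w = 2 * n"
proof -
  have d: "distinct w" and s: "set w = c ` {1..n} \<union> cb ` {1..n}" using assms by (auto simp: ucode_def)
  have "card (set w) = card (c ` {1..n}) + card (cb ` {1..n})"
    unfolding s by (rule card_Un_disjoint) (auto simp: c_neq_cb)
  also have "\<dots> = 2 * n"
    using card_image[OF inj_on_subset[OF inj_c]] card_image[OF inj_on_subset[OF inj_cb]] by simp
  finally show ?thesis using distinct_card[OF d] by simp
qed

lemma ucode_bar_mem:
  assumes "ucode c cb n w" "x \<in> set w" shows "bar x \<in> set w"
proof -
  have w: "set w = c ` {1..n} \<union> cb ` {1..n}" using assms(1) by (simp add: ucode_def)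
  then consider j where "j \<in> {1..n}" "x = c j" | j where "j \<in> {1..n}" "x = cb j" using assms(2) by blast
  then show ?thesis by cases (simp_all add: w bar_c bar_cb)
qed

lemma index_if_c_mem: "c j \<in> c ` {1..n} \<union> cb ` {1..n} \<Longrightarrow> j \<in> {1..n}"
  using inj_c c_neq_cb by (auto simp: inj_eq)

end

locale involution_list = alphabet +
  fixes xs :: "'a list" and \<alpha> :: "'a \<Rightarrow> 'a"
  assumes distinct_xs: "distinct xs" and fpf_involution: "fpf_involution_on \<alpha> (set xs)"
begin

abbreviation "openers \<equiv> {y \<in> set xs. index_of xs y < index_of xs (\<alpha> y)}"
abbreviation "rank \<equiv> opening_rank xs \<alpha>"
abbreviation "label \<equiv> canonical_label c cb xs \<alpha>"

lemma \<alpha>_in: "x \<in> set xs \<Longrightarrow> \<alpha> x \<in> set xs"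
  and \<alpha>_neq: "x \<in> set xs \<Longrightarrow> \<alpha> x \<noteq> x"
  and \<alpha>_\<alpha>: "x \<in> set xs \<Longrightarrow> \<alpha> (\<alpha> x) = x"
  using fpf_involution by (auto simp: fpf_involution_on_def)

lemma \<alpha>_opener_if_not_opener:
  assumes x: "x \<in> set xs" and "x \<notin> openers" shows "\<alpha> x \<in> openers"
proof -
  have "index_of xs (\<alpha> x) \<noteq> index_of xs x" using index_of_inj[OF \<alpha>_in[OF x] x] \<alpha>_neq[OF x] by auto
  moreover have "\<not> index_of xs x < index_of xs (\<alpha> x)" using assms by simp
  ultimately have "index_of xs (\<alpha> x) < index_of xs (\<alpha> (\<alpha> x))" unfolding \<alpha>_\<alpha>[OF x] by linarith
  then show ?thesis using \<alpha>_in[OF x] by simp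
qed

lemma \<alpha>_not_opener: "x \<in> openers \<Longrightarrow> \<alpha> x \<notin> openers"
  using \<alpha>_in[of x] \<alpha>_\<alpha>[of x] by auto

lemma set_eq_openers_Un: "set xs = openers \<union> \<alpha> ` openers"
proof (intro equalityI subsetI)
  fix x assume x: "x \<in> set xs"
  show "x \<in> openers \<union> \<alpha> ` openers"
  proof (cases "x \<in> openers")
    case False
    then have "x = \<alpha> (\<alpha> x)" "\<alpha> x \<in> openers" using x \<alpha>_\<alpha> \<alpha>_opener_if_not_opener by auto
    then show ?thesis by blast
  qed simp
qed (auto simp: \<alpha>_in)

lemma card_openers: "2 * card openers = length xs"
proof -
  have disj: "openers \<inter> \<alpha> ` openers = {}" using \<alpha>_not_opener by auto
  have "inj_on \<alpha> openers" by (rule inj_onI) (metis (no_types, lifting) mem_Collect_eq \<alpha>_\<alpha>)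
  then have "card (\<alpha> ` openers) = card openers" by (rule card_image)
  then have "card (set xs) = 2 * card openers"
    using card_Un_disjoint[of openers "\<alpha> ` openers"] set_eq_openers_Un disj by simp
  then show ?thesis using distinct_card[OF distinct_xs] by simp
qed

lemma rank_eq: "rank x = card {y \<in> openers. index_of xs y \<le> index_of xs x}"
  unfolding opening_rank_def by (rule arg_cong[where f=card]) auto

lemma rank_less_if_index_of_less:
  assumes "x \<in> openers" "y \<in> openers" "index_of xs x < index_of xs y"
  shows "rank x < rank y"
  unfolding rank_eq
proof (rule psubset_card_mono)
  show "finite {z \<in> openers. index_of xs z \<le> index_of xs y}" by simp
  have "y \<in> {z \<in> openers. index_of xs z \<le> index_of xs y}"
    "y \<notin> {z \<in> openers. index_of xs z \<le> index_of xs x}" using assms by auto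
  moreover have "{z \<in> openers. index_of xs z \<le> index_of xs x} \<subseteq> {z \<in> openers. index_of xs z \<le> index_of xs y}"
    using assms(3) by auto
  ultimately show "{z \<in> openers. index_of xs z \<le> index_of xs x} \<subset> {z \<in> openers. index_of xs z \<le> index_of xs y}"
    by blast
qed

lemma rank_less_iff:
  assumes "x \<in> openers" "y \<in> openers"
  shows "rank x < rank y \<longleftrightarrow> index_of xs x < index_of xs y"
proof
  assume less: "rank x < rank y"
  show "index_of xs x < index_of xs y"
  proof (rule ccontr)
    assume "\<not> ?thesis"
    then consider "index_of xs y < index_of xs x" | "index_of xs x = index_of xs y" by linarith
    then show False
    proof cases
      case 1
      then show False using rank_less_if_index_of_less[OF assms(2,1)] less by simp
    next
      case 2
      then have "x = y" using index_of_inj[of x xs y] assms by simp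
      then show False using less by simp
    qed
  qed
qed (rule rank_less_if_index_of_less[OF assms])

lemma inj_on_rank: "inj_on rank openers"
proof (rule inj_onI)
  fix x y assume x: "x \<in> openers" and y: "y \<in> openers" and eq: "rank x = rank y"
  have "\<not> index_of xs x < index_of xs y" "\<not> index_of xs y < index_of xs x"
    using rank_less_iff[OF x y] rank_less_iff[OF y x] eq by simp_all
  then have "index_of xs x = index_of xs y" by linarith
  then show "x = y" using index_of_inj[of x xs y] x y by simp
qed

lemma rank_image: "rank ` openers = {1..card openers}"
proof (rule card_subset_eq)
  show "rank ` openers \<subseteq> {1..card openers}"
  proof
    fix j assume "j \<in> rank ` openers"
    then obtain x where x: "x \<in> openers" "j = rank x" by blast
    have "x \<in> {y \<in> openers. index_of xs y \<le> index_of xs x}" using x by auto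
    then have "rank x \<ge> 1" unfolding rank_eq
      by (metis (no_types, lifting) One_nat_def Suc_leI card_gt_0_iff empty_iff finite_subset
          List.finite_set mem_Collect_eq subsetI)
    moreover have "rank x \<le> card openers" unfolding rank_eq by (rule card_mono) auto
    ultimately show "j \<in> {1..card openers}" using x by simp
  qed
  show "card (rank ` openers) = card {1..card openers}" using card_image[OF inj_on_rank] by simp
qed simp

lemma label_opener: "x \<in> openers \<Longrightarrow> label x = c (rank x)"
  by (simp add: canonical_label_def)

lemma label_non_opener: "x \<in> set xs \<Longrightarrow> x \<notin> openers \<Longrightarrow> label x = cb (rank (\<alpha> x))"
  by (simp add: canonical_label_def)

lemma label_\<alpha>_opener: "x \<in> openers \<Longrightarrow> label (\<alpha> x) = cb (rank x)"
  using label_non_opener[of "\<alpha> x"] \<alpha>_in \<alpha>_not_opener \<alpha>_\<alpha> by simp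

lemma label_\<alpha>: assumes "x \<in> set xs" shows "label (\<alpha> x) = bar (label x)"
proof (cases "x \<in> openers")
  case True
  then show ?thesis using label_\<alpha>_opener label_opener bar_c by simp
next
  case False
  then show ?thesis
    using label_non_opener[OF assms] \<alpha>_opener_if_not_opener[OF assms] label_opener bar_cb by simp
qed

lemma inj_on_label: "inj_on label (set xs)"
proof (rule inj_onI)
  fix x y assume x: "x \<in> set xs" and y: "y \<in> set xs" and eq: "label x = label y"
  have rank_eq_if_opener: "rank u = rank v \<Longrightarrow> u \<in> openers \<Longrightarrow> v \<in> openers \<Longrightarrow> u = v" for u v
    using inj_on_rank by (simp add: inj_on_def)
  show "x = y"
  proof (cases "x \<in> openers"; cases "y \<in> openers")
    assume "x \<in> openers" "y \<in> openers"
    then show ?thesis using eq label_opener inj_c rank_eq_if_opener by (simp add: inj_eq)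
  next
    assume "x \<in> openers" "y \<notin> openers"
    then show ?thesis using eq label_opener[of x] label_non_opener[OF y] c_neq_cb by simp
  next
    assume "x \<notin> openers" "y \<in> openers"
    then show ?thesis using eq label_opener[of y] label_non_opener[OF x] c_neq_cb by (metis c_neq_cb)
  next
    assume nx: "x \<notin> openers" and ny: "y \<notin> openers"
    then have "rank (\<alpha> x) = rank (\<alpha> y)"
      using eq label_non_opener[OF x nx] label_non_opener[OF y ny] inj_cb by (simp add: inj_eq)
    then have "\<alpha> x = \<alpha> y"
      using rank_eq_if_opener \<alpha>_opener_if_not_opener[OF x nx] \<alpha>_opener_if_not_opener[OF y ny] by blast
    then show ?thesis using \<alpha>_\<alpha>[OF x] \<alpha>_\<alpha>[OF y] by metis
  qed
qed

lemma set_map_label: "set (map label xs) = c ` {1..card openers} \<union> cb ` {1..card openers}"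
proof -
  have "set (map label xs) = label ` openers \<union> label ` \<alpha> ` openers"
    by (metis set_eq_openers_Un image_Un list.set_map)
  also have "label ` openers = c ` rank ` openers" using label_opener by (auto simp: image_iff)
  also have "label ` \<alpha> ` openers = cb ` rank ` openers" using label_\<alpha>_opener by (auto simp: image_iff)
  finally show ?thesis unfolding rank_image .
qed

lemma ucode_map_label: "ucode c cb (length xs div 2) (map label xs)"
proof -
  have n: "length xs div 2 = card openers" using card_openers by simp
  have opener_of: "\<exists>x\<in>openers. rank x = i" if "i \<in> {1..card openers}" for i
  proof -
    have "i \<in> rank ` openers" using that rank_image by simp
    then show ?thesis by (auto simp del: opening_rank_def)
  qed
  have bar_after: "before (map label xs) (c i) (cb i)" if i: "i \<in> {1..card openers}" for i
  proof -
    obtain x where x: "x \<in> openers" "rank x = i" using opener_of[OF i] by blast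
    then have "before (map label xs) (label x) (label (\<alpha> x))"
      using \<alpha>_in by (intro before_map_index_of) auto
    then show ?thesis using label_opener label_\<alpha>_opener x by simp
  qed
  have increasing: "before (map label xs) (c i) (c j)" if ij: "1 \<le> i" "i < j" "j \<le> card openers" for i j
  proof -
    obtain x y where x: "x \<in> openers" "rank x = i" and y: "y \<in> openers" "rank y = j"
      using opener_of[of i] opener_of[of j] ij by auto
    then have "before (map label xs) (label x) (label y)"
      using rank_less_iff[OF x(1) y(1)] ij(2) by (intro before_map_index_of) auto
    then show ?thesis using label_opener x y by simp
  qed
  have "distinct (map label xs)" using distinct_map inj_on_label distinct_xs by blast
  then show ?thesis unfolding ucode_def n using set_map_label bar_after increasing by simp
qed

end

locale coded_involution_list = involution_list +
  fixes g :: "'a \<Rightarrow> letter" and n :: nat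
  assumes ucode_map_g: "ucode c cb n (map g xs)" and inj_on_g: "inj_on g (set xs)"
    and g_\<alpha>: "\<And>x. x \<in> set xs \<Longrightarrow> g (\<alpha> x) = bar (g x)"
begin

lemma set_map_g: "set (map g xs) = c ` {1..n} \<union> cb ` {1..n}"
  using ucode_map_g by (simp add: ucode_def)

lemma index_of_less_if_before:
  "u \<in> set xs \<Longrightarrow> v \<in> set xs \<Longrightarrow> before (map g xs) (g u) (g v) \<Longrightarrow> index_of xs u < index_of xs v"
  using index_of_less_if_before_map[OF distinct_xs inj_on_g] .

lemma g_c_index: "y \<in> set xs \<Longrightarrow> g y = c m \<Longrightarrow> m \<in> {1..n}"
  using set_map_g index_if_c_mem by (metis image_eqI list.set_map)

lemma opener_if_g_unbarred:
  assumes y: "y \<in> set xs" and gy: "g y = c m"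
  shows "y \<in> openers"
proof -
  have "g (\<alpha> y) = cb m" using g_\<alpha>[OF y] gy bar_c by simp
  then have "before (map g xs) (g y) (g (\<alpha> y))"
    using ucode_map_g g_c_index[OF y gy] gy by (simp add: ucode_def)
  then show ?thesis using index_of_less_if_before y \<alpha>_in[OF y] by blast
qed

lemma g_unbarred_if_opener:
  assumes y: "y \<in> openers" shows "\<exists>m. g y = c m"
proof (rule ccontr)
  assume "\<not> ?thesis"
  moreover have "g y \<in> c ` {1..n} \<union> cb ` {1..n}" using set_map_g y by auto
  ultimately obtain m where "g y = cb m" by blast
  then have "g (\<alpha> y) = c m" using g_\<alpha>[of y] y bar_cb by simp
  then show False using opener_if_g_unbarred[of "\<alpha> y"] \<alpha>_in \<alpha>_not_opener y by auto
qed

lemma openers_up_to: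
  assumes y: "y \<in> openers" and gy: "g y = c j"
  shows "{z \<in> openers. index_of xs z \<le> index_of xs y} = {z \<in> set xs. g z \<in> c ` {1..j}}"
proof -
  have before_c: "before (map g xs) (c i) (c i')" if "1 \<le> i" "i < i'" "i' \<le> n" for i i'
    using ucode_map_g that by (simp add: ucode_def)
  have j: "j \<in> {1..n}" using g_c_index[of y j] y gy by simp
  show ?thesis
  proof (intro equalityI subsetI)
    fix z assume z: "z \<in> {z \<in> openers. index_of xs z \<le> index_of xs y}"
    obtain m where gz: "g z = c m" using g_unbarred_if_opener[of z] z by auto
    have m: "m \<in> {1..n}" using g_c_index[of z m] z gz by simp
    have "m \<le> j"
    proof (rule ccontr)
      assume "\<not> m \<le> j"
      then have "before (map g xs) (g y) (g z)" using before_c[of j m] j m gy gz by simp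
      then show False using index_of_less_if_before[of y z] y z by simp
    qed
    then show "z \<in> {z \<in> set xs. g z \<in> c ` {1..j}}" using z gz m by auto
  next
    fix z assume "z \<in> {z \<in> set xs. g z \<in> c ` {1..j}}"
    then obtain m where z: "z \<in> set xs" and gz: "g z = c m" and m: "m \<in> {1..j}" by auto
    have "index_of xs z \<le> index_of xs y"
    proof (cases "m = j")
      case True
      then have "g z = g y" using gz gy by simp
      then have "z = y" using inj_onD[OF inj_on_g _ z] y by simp
      then show ?thesis by simp
    next
      case False
      then have "before (map g xs) (g z) (g y)" using before_c[of m j] j m gy gz by simp
      then show ?thesis using index_of_less_if_before[of z y] y z by simp
    qed
    then show "z \<in> {z \<in> openers. index_of xs z \<le> index_of xs y}"
      using opener_if_g_unbarred[OF z gz] by simp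
  qed
qed

lemma rank_eq_if_g_unbarred:
  assumes y: "y \<in> openers" and gy: "g y = c j"
  shows "rank y = j"
proof -
  have j: "j \<le> n" using g_c_index[of y j] y gy by simp
  let ?Z = "{z \<in> set xs. g z \<in> c ` {1..j}}"
  have "c ` {1..j} \<subseteq> g ` set xs" using set_map_g j by auto
  then have "g ` ?Z = c ` {1..j}"
  proof (intro equalityI subsetI)
    fix u assume "u \<in> c ` {1..j}"
    moreover obtain z where "z \<in> set xs" "u = g z" using \<open>u \<in> c ` {1..j}\<close> \<open>c ` {1..j} \<subseteq> g ` set xs\<close> by auto
    ultimately show "u \<in> g ` ?Z" by auto
  qed auto
  moreover have "inj_on g ?Z" using inj_on_g by (rule inj_on_subset) auto
  ultimately have "card ?Z = card (c ` {1..j})" using card_image by metis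
  also have "\<dots> = j" using card_image[OF inj_on_subset[OF inj_c]] by simp
  finally show ?thesis unfolding rank_eq openers_up_to[OF y gy] .
qed

lemma g_eq_label: assumes x: "x \<in> set xs" shows "g x = label x"
proof (cases "x \<in> openers")
  case True
  then obtain j where "g x = c j" using g_unbarred_if_opener[OF True] by blast
  then show ?thesis using rank_eq_if_g_unbarred[OF True] label_opener[OF True] by simp
next
  case False
  then have ax: "\<alpha> x \<in> openers" using \<alpha>_opener_if_not_opener x by simp
  then obtain j where gax: "g (\<alpha> x) = c j" using g_unbarred_if_opener[OF ax] by blast
  have "g x = bar (g (\<alpha> x))" using g_\<alpha>[OF \<alpha>_in[OF x]] \<alpha>_\<alpha>[OF x] by simp
  then show ?thesis using gax bar_c rank_eq_if_g_unbarred[OF ax gax] label_non_opener[OF x False] by simp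
qed

end

lemma (in involution_list) canonical_label_unique:
  assumes "ucode c cb n (map g xs)" "inj_on g (set xs)" "\<And>x. x \<in> set xs \<Longrightarrow> g (\<alpha> x) = bar (g x)"
    and "x \<in> set xs"
  shows "g x = label x"
  using coded_involution_list.g_eq_label[of c cb xs \<alpha> g n] assms
  by (simp add: coded_involution_list_def coded_involution_list_axioms_def involution_list_axioms)


section \<open>Restriction of a permutation to a subset\<close>

lemma restr_eq_first_return:
  assumes "x \<in> P" "0 < d" "(p ^^ d) x \<in> P" "\<And>e. 0 < e \<Longrightarrow> e < d \<Longrightarrow> (p ^^ e) x \<notin> P"
  shows "restr p P x = (p ^^ d) x"
proof -
  have "(LEAST k. 0 < k \<and> (p ^^ k) x \<in> P) = d"
  proof (rule Least_equality)
    show "0 < d \<and> (p ^^ d) x \<in> P" using assms by simp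
    show "d \<le> k" if "0 < k \<and> (p ^^ k) x \<in> P" for k
      using assms(4)[of k] that by (meson not_le)
  qed
  then show ?thesis using assms(1) by (simp add: restr_def)
qed

lemma first_in_eq_first_hit:
  assumes "(p ^^ d) r \<in> P" "\<And>e. e < d \<Longrightarrow> (p ^^ e) r \<notin> P"
  shows "first_in p P r = (p ^^ d) r"
proof -
  have "(LEAST i. (p ^^ i) r \<in> P) = d"
    by (rule Least_equality) (use assms in \<open>auto simp: not_le[symmetric]\<close>)
  then show ?thesis by (simp add: first_in_def)
qed

lemma restr_mem:
  assumes "x \<in> P" "\<exists>k>0. (p ^^ k) x \<in> P" shows "restr p P x \<in> P"
  using assms LeastI_ex[OF assms(2)] unfolding restr_def by simp

lemma restr_eq_if_in:
  assumes "h \<in> T" "a h \<in> T" shows "restr a T h = a h"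
  using restr_eq_first_return[of h T 1 a] assms by simp

section \<open>Lists traversed cyclically by a permutation\<close>

lemma orbit_list_of_cyclic:
  assumes p: "p permutes H" and fin: "finite H" and r: "r \<in> H" and cyc: "is_cyclic p H"
  defines "L \<equiv> map (\<lambda>i. (p ^^ i) r) [0..<card H]"
  shows "distinct L" "set L = H" "length L = card H"
    "\<And>i. i < card H \<Longrightarrow> p (L ! i) = L ! (Suc i mod card H)" "L ! 0 = r"
proof -
  have perm: "permutation p" using p fin permutation_permutes by blast
  let ?d = "least_power p r"
  have dist: "distinct (support p r)" using cycle_of_permutation[OF perm] by simp
  have "set (support p r) = range (\<lambda>i. (p ^^ i) r)" using support_set[OF perm] .
  also have "\<dots> = H"
  proof
    show "range (\<lambda>i. (p ^^ i) r) \<subseteq> H" using permutes_in_funpow_image[OF p r] by auto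
    show "H \<subseteq> range (\<lambda>i. (p ^^ i) r)"
    proof
      fix y assume "y \<in> H"
      then obtain k where "(p ^^ k) r = y" using cyc r unfolding is_cyclic_def by blast
      then show "y \<in> range (\<lambda>i. (p ^^ i) r)" by (metis rangeI)
    qed
  qed
  finally have set_support: "set (support p r) = H" .
  have d: "?d = card H" using distinct_card[OF dist] set_support by simp
  have L_support: "L = support p r" unfolding L_def d ..
  show "distinct L" "set L = H" using L_support dist set_support by auto
  show "length L = card H" unfolding L_def by simp
  have "?d > 0" using least_power_of_permutation(2)[OF perm] .
  then show "L ! 0 = r" unfolding L_support by simp
  fix i assume i: "i < card H"
  show "p (L ! i) = L ! (Suc i mod card H)"
  proof (cases "Suc i < card H")
    case True then show ?thesis using i unfolding L_def by simp
  next
    case False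
    then have Suc_i: "Suc i = card H" using i by simp
    have "p (L ! i) = (p ^^ Suc i) r" using i unfolding L_def by simp
    also have "\<dots> = (p ^^ ?d) r" using Suc_i d by simp
    also have "\<dots> = r" using least_power_of_permutation(1)[OF perm] .
    finally show ?thesis using Suc_i \<open>L ! 0 = r\<close> by simp
  qed
qed

locale cyclic_list =
  fixes p :: "'a \<Rightarrow> 'a" and L :: "'a list"
  assumes distinct_L: "distinct L" and L_nonempty: "L \<noteq> []"
    and p_nth: "\<And>i. i < length L \<Longrightarrow> p (L ! i) = L ! (Suc i mod length L)"
begin

abbreviation "N \<equiv> length L"

lemma funpow_nth: "i < N \<Longrightarrow> (p ^^ j) (L ! i) = L ! ((i + j) mod N)"
proof (induction j)
  case (Suc j)
  have "(p ^^ Suc j) (L ! i) = p (L ! ((i + j) mod N))" using Suc by simp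
  also have "\<dots> = L ! (Suc ((i + j) mod N) mod N)" using p_nth L_nonempty by simp
  also have "Suc ((i + j) mod N) mod N = (i + Suc j) mod N" by (simp add: mod_Suc_eq)
  finally show ?case .
qed simp

lemma is_cyclic: "is_cyclic p (set L)"
  unfolding is_cyclic_def
proof (intro ballI)
  fix x y assume "x \<in> set L" "y \<in> set L"
  then obtain i j where ij: "i < N" "j < N" "L ! i = x" "L ! j = y" by (metis in_set_conv_nth)
  have "(p ^^ (j + N - i)) x = L ! ((i + (j + N - i)) mod N)" using funpow_nth ij by auto
  also have "(i + (j + N - i)) mod N = j" using ij by simp
  finally show "\<exists>k. (p ^^ k) x = y" using ij by blast
qed

lemma restr_nth_before_wrap:
  assumes "a < b" "b < N" "L ! a \<in> P" "L ! b \<in> P" "\<And>e. a < e \<Longrightarrow> e < b \<Longrightarrow> L ! e \<notin> P"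
  shows "restr p P (L ! a) = L ! b"
proof -
  have "(p ^^ e) (L ! a) = L ! (a + e)" if "a + e < N" for e using funpow_nth[of a e] that by simp
  then show ?thesis using restr_eq_first_return[of "L ! a" P "b - a" p] assms by auto
qed

lemma restr_nth_wrap:
  assumes "b \<le> a" "a < N" "L ! a \<in> P" "L ! b \<in> P"
    and "\<And>e. a < e \<Longrightarrow> e < N \<Longrightarrow> L ! e \<notin> P" and "\<And>e. e < b \<Longrightarrow> L ! e \<notin> P"
  shows "restr p P (L ! a) = L ! b"
proof (rule trans[OF restr_eq_first_return[of _ _ "N - a + b"]])
  have "(a + (N - a + b)) mod N = b" using assms by (simp add: mod_if)
  then show "(p ^^ (N - a + b)) (L ! a) = L ! b" using funpow_nth[of a] assms by simp
  then show "(p ^^ (N - a + b)) (L ! a) \<in> P" using assms by simp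
  show "(p ^^ e) (L ! a) \<notin> P" if "0 < e" "e < N - a + b" for e
  proof (cases "a + e < N")
    case True
    then show ?thesis using funpow_nth[of a e] assms(5)[of "a + e"] that by simp
  next
    case False
    then have "(a + e) mod N = a + e - N" using that assms by (simp add: mod_if)
    then show ?thesis using funpow_nth[of a e] assms(2,6) that False by simp
  qed
qed (use assms in simp_all)

definition count_upto :: "'a set \<Rightarrow> nat \<Rightarrow> nat" where
  "count_upto P k = length (filter (\<lambda>x. x \<in> P) (take k L))"

lemma count_upto_Suc: "a < N \<Longrightarrow> count_upto P (Suc a) = count_upto P a + (if L ! a \<in> P then 1 else 0)"
  unfolding count_upto_def by (simp add: take_Suc_conv_app_nth)

lemma count_upto_const:
  "a \<le> b \<Longrightarrow> b \<le> N \<Longrightarrow> (\<And>k. a \<le> k \<Longrightarrow> k < b \<Longrightarrow> L ! k \<notin> P) \<Longrightarrow> count_upto P b = count_upto P a"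
proof (induction b)
  case (Suc b)
  show ?case
  proof (cases "a = Suc b")
    case False
    then have "a \<le> b" using Suc by simp
    then show ?thesis using Suc count_upto_Suc[of b P] by simp
  qed simp
qed simp

lemma count_upto_N: "count_upto P N = length (filter (\<lambda>x. x \<in> P) L)"
  unfolding count_upto_def by simp

lemma filter_nth_count_upto:
  assumes "a < N" "L ! a \<in> P"
  shows "filter (\<lambda>x. x \<in> P) L ! count_upto P a = L ! a"
proof -
  have "L = take a L @ L ! a # drop (Suc a) L" using assms id_take_nth_drop by blast
  then have "filter (\<lambda>x. x \<in> P) L
      = filter (\<lambda>x. x \<in> P) (take a L) @ L ! a # filter (\<lambda>x. x \<in> P) (drop (Suc a) L)"
    using assms by (metis filter.simps(2) filter_append)
  then show ?thesis unfolding count_upto_def by (simp add: nth_append)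
qed

lemma count_upto_less_length:
  assumes "a < N" "L ! a \<in> P" shows "count_upto P a < length (filter (\<lambda>x. x \<in> P) L)"
proof -
  have "count_upto P (Suc a) = Suc (count_upto P a)" using count_upto_Suc[of a P] assms by simp
  moreover have "count_upto P (Suc a) \<le> count_upto P N" unfolding count_upto_def
    by (metis assms(1) Suc_leI length_filter_le append_take_drop_id filter_append length_append
        le_add1 take_all le_refl min_def take_take)
  ultimately show ?thesis using count_upto_N by simp
qed

abbreviation "filtered P \<equiv> filter (\<lambda>x. x \<in> P) L"

lemma restr_nth_filter:
  assumes i: "i < length (filtered P)"
  shows "restr p P (filtered P ! i) = filtered P ! (Suc i mod length (filtered P))"
proof -
  define a where "a = index_of L (filtered P ! i)"
  have "filtered P ! i \<in> set (filtered P)" using i nth_mem by blast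
  then have a: "a < N" "L ! a = filtered P ! i" and aP: "L ! a \<in> P"
    using index_of_less_length_and_nth[of "filtered P ! i" L] unfolding a_def by auto
  have "count_upto P a = i"
    using filter_nth_count_upto[OF a(1) aP] count_upto_less_length[OF a(1) aP] a(2) i distinct_L
    by (metis distinct_filter nth_eq_iff_index_eq)
  then have count_Suc: "count_upto P (Suc a) = Suc i" using count_upto_Suc[of a P] a aP by simp
  show ?thesis
  proof (cases "\<exists>b. a < b \<and> b < N \<and> L ! b \<in> P")
    case True
    define b where "b = (LEAST b. a < b \<and> b < N \<and> L ! b \<in> P)"
    have b: "a < b" "b < N" "L ! b \<in> P" using LeastI_ex[OF True] unfolding b_def by blast+
    have between: "L ! e \<notin> P" if "a < e" "e < b" for e
      using not_less_Least[of e "\<lambda>b. a < b \<and> b < N \<and> L ! b \<in> P"] that b unfolding b_def by auto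
    have "count_upto P b = Suc i" using count_upto_const[of "Suc a" b P] b between count_Suc by simp
    moreover have "count_upto P b < length (filtered P)" using count_upto_less_length[of b P] b by simp
    ultimately show ?thesis
      using restr_nth_before_wrap[OF b(1,2) aP b(3) between] filter_nth_count_upto[of b P] a b by simp
  next
    case False
    have "\<exists>b. b < N \<and> L ! b \<in> P" using a aP by blast
    define b where "b = (LEAST b. b < N \<and> L ! b \<in> P)"
    have b: "b < N" "L ! b \<in> P" using LeastI_ex[OF \<open>\<exists>b. _\<close>] unfolding b_def by blast+
    have before_b: "L ! e \<notin> P" if "e < b" for e
      using not_less_Least[of e "\<lambda>b. b < N \<and> L ! b \<in> P"] that b unfolding b_def by auto
    have "b \<le> a" using b aP a(1) before_b not_less by blast
    have after_a: "L ! e \<notin> P" if "a < e" "e < N" for e using False that by blast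
    have "count_upto P N = Suc i" using count_upto_const[of "Suc a" N P] a after_a count_Suc by simp
    then have "Suc i mod length (filtered P) = 0" using count_upto_N by simp
    moreover have "count_upto P b = 0"
      using count_upto_const[of 0 b P] b before_b by (simp add: count_upto_def)
    ultimately show ?thesis
      using restr_nth_wrap[OF \<open>b \<le> a\<close> a(1) aP b(2) after_a before_b] filter_nth_count_upto[OF b] a by simp
  qed
qed

lemma first_in_filter:
  assumes "filtered P \<noteq> []"
  shows "first_in p P (L ! 0) = filtered P ! 0"
proof -
  have "\<exists>b. b < N \<and> L ! b \<in> P" using assms by (metis filter_empty_conv in_set_conv_nth)
  define b where "b = (LEAST b. b < N \<and> L ! b \<in> P)"
  have b: "b < N" "L ! b \<in> P" using LeastI_ex[OF \<open>\<exists>b. _\<close>] unfolding b_def by blast+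
  have before_b: "L ! e \<notin> P" if "e < b" for e
    using not_less_Least[of e "\<lambda>b. b < N \<and> L ! b \<in> P"] that b unfolding b_def by auto
  have funpow_0: "(p ^^ k) (L ! 0) = L ! k" if "k < N" for k using funpow_nth[of 0 k] that L_nonempty by simp
  have "count_upto P b = 0" using count_upto_const[of 0 b P] b before_b by (simp add: count_upto_def)
  then have "filtered P ! 0 = L ! b" using filter_nth_count_upto[OF b] by simp
  then show ?thesis using first_in_eq_first_hit[of b p "L ! 0" P] b before_b funpow_0 by simp
qed

end

lemma cyclic_list_filter:
  assumes "cyclic_list p L" "filter (\<lambda>x. x \<in> P) L \<noteq> []"
  shows "cyclic_list (restr p P) (filter (\<lambda>x. x \<in> P) L)"
  using assms cyclic_list.restr_nth_filter[OF assms(1)] unfolding cyclic_list_def by auto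


lemma permutes_funpow_return:
  assumes "p permutes H" "finite H" shows "\<exists>k>0. (p ^^ k) x = x"
proof -
  obtain M where "M > 0" "p ^^ M = id"
    using permutation_is_nilpotent[OF permutes_imp_permutation[OF assms(2,1)]] by blast
  then show ?thesis by auto
qed

lemma restr_permutes_mem:
  assumes "p permutes H" "finite H" "z \<in> P" shows "restr p P z \<in> P"
proof (rule restr_mem[OF assms(3)])
  obtain k where "k > 0" "(p ^^ k) z = z" using permutes_funpow_return[OF assms(1,2)] by blast
  then show "\<exists>k>0. (p ^^ k) z \<in> P" using assms(3) by auto
qed

lemma permutes_if_involution:
  assumes inv: "\<And>x. x \<in> H \<Longrightarrow> g x \<in> H \<and> g (g x) = x" and id: "\<And>x. x \<notin> H \<Longrightarrow> g x = x"
  shows "g permutes H"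
proof (rule bij_imp_permutes)
  have "g (g x) = x" for x using inv id by (cases "x \<in> H") auto
  then have "bij g" by (rule involuntory_imp_bij)
  moreover have "g ` H = H"
  proof
    show "H \<subseteq> g ` H" using inv by (metis image_eqI subsetI)
  qed (use inv in auto)
  ultimately show "bij_betw g H H" using bij_betw_subset by blast
qed (rule id)

lemma is_cyclic_if_reaches_all:
  assumes p: "p permutes H" and fin: "finite H" and reach: "\<And>y. y \<in> H \<Longrightarrow> \<exists>k. (p ^^ k) x0 = y"
  shows "is_cyclic p H"
  unfolding is_cyclic_def
proof (intro ballI)
  fix u v assume "u \<in> H" "v \<in> H"
  then obtain i j where ij: "(p ^^ i) x0 = u" "(p ^^ j) x0 = v" using reach by blast
  obtain M where M: "M > 0" "p ^^ M = id"
    using permutation_is_nilpotent[OF permutes_imp_permutation[OF fin p]] by blast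
  have "(p ^^ (j + M * i - i)) u = (p ^^ (j + M * i - i + i)) x0" using ij by (simp add: funpow_add)
  also have "j + M * i - i + i = j + M * i" using M by (simp add: trans_le_add2)
  also have "(p ^^ (j + M * i)) x0 = (p ^^ j) (((p ^^ M) ^^ i) x0)" by (simp add: funpow_add funpow_mult)
  also have "\<dots> = v" using M ij by simp
  finally show "\<exists>k. (p ^^ k) u = v" by blast
qed

lemma funpow_mod_period:
  assumes "p ^^ M = id" shows "(p ^^ k) x = (p ^^ (k mod M)) x"
proof -
  have "(p ^^ k) x = (p ^^ (k mod M)) (((p ^^ M) ^^ (k div M)) x)"
    by (metis funpow_add funpow_mult comp_apply mod_mult_div_eq mult.commute)
  then show ?thesis using assms by simp
qed

lemma exists_last_visit_before:
  assumes p: "p permutes H" and fin: "finite H" and yS: "y \<notin> S" and reach: "\<exists>k. (p ^^ k) y \<in> S"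
  shows "\<exists>z d. z \<in> S \<and> 0 < d \<and> (p ^^ d) z = y \<and> (\<forall>j. 0 < j \<longrightarrow> j < d \<longrightarrow> (p ^^ j) z \<notin> S)"
proof -
  obtain M where M: "M > 0" "p ^^ M = id"
    using permutation_is_nilpotent[OF permutes_imp_permutation[OF fin p]] by blast
  obtain k where k: "(p ^^ k) y \<in> S" using reach by blast
  have km: "(p ^^ (k mod M)) y \<in> S" using k funpow_mod_period[OF M(2), of k y] by simp
  then have "k mod M \<noteq> 0" using yS by (metis funpow_0)
  then have ex: "\<exists>d. 0 < d \<and> d \<le> M \<and> (p ^^ (M - d)) y \<in> S"
    using km M by (intro exI[of _ "M - k mod M"]) auto
  define d where "d = (LEAST d. 0 < d \<and> d \<le> M \<and> (p ^^ (M - d)) y \<in> S)"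
  have d: "0 < d" "d \<le> M" "(p ^^ (M - d)) y \<in> S" using LeastI_ex[OF ex] unfolding d_def by blast+
  have nd: "\<not> (0 < e \<and> e \<le> M \<and> (p ^^ (M - e)) y \<in> S)" if "e < d" for e
    using not_less_Least[of e "\<lambda>d. 0 < d \<and> d \<le> M \<and> (p ^^ (M - d)) y \<in> S"] that
    unfolding d_def by blast
  define z where "z = (p ^^ (M - d)) y"
  have "(p ^^ d) z = (p ^^ (d + (M - d))) y" unfolding z_def by (simp add: funpow_add)
  then have "(p ^^ d) z = y" using d M by simp
  moreover have "(p ^^ j) z \<notin> S" if "0 < j" "j < d" for j
  proof -
    have "(p ^^ j) z = (p ^^ (j + (M - d))) y" unfolding z_def by (simp add: funpow_add)
    also have "j + (M - d) = M - (d - j)" using that d by simp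
    finally have "(p ^^ j) z = (p ^^ (M - (d - j))) y" .
    then show ?thesis using nd[of "d - j"] that d by simp
  qed
  ultimately show ?thesis using d(1,3) unfolding z_def by blast
qed

lemma restr_eq_restr_shift:
  assumes agree: "\<And>z. z \<in> H \<Longrightarrow> z \<notin> P \<Longrightarrow> q z = p z"
    and pH: "\<And>z. z \<in> H \<Longrightarrow> p z \<in> H"
    and xH: "x \<in> H" and xP: "x \<in> P" and yP: "y \<in> P" and first: "q y = p x"
    and ex: "\<exists>k>0. (p ^^ k) x \<in> P"
  shows "restr q P y = restr p P x"
proof -
  define k0 where "k0 = (LEAST k. k > 0 \<and> (p ^^ k) x \<in> P)"
  have k0: "k0 > 0" "(p ^^ k0) x \<in> P" using LeastI_ex[OF ex] unfolding k0_def by blast+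
  have nk: "(p ^^ j) x \<notin> P" if "0 < j" "j < k0" for j
    using not_less_Least[of j "\<lambda>k. k > 0 \<and> (p ^^ k) x \<in> P"] that unfolding k0_def by auto
  have inH: "(p ^^ j) x \<in> H" for j by (induction j) (use xH pH in auto)
  have eq: "(q ^^ j) y = (p ^^ j) x" if "0 < j" "j \<le> k0" for j
    using that
  proof (induction j)
    case (Suc j)
    show ?case
    proof (cases "j = 0")
      case False
      then have "(q ^^ j) y = (p ^^ j) x" "(p ^^ j) x \<notin> P" using Suc nk[of j] by auto
      then show ?thesis using agree inH by simp
    qed (use first in simp)
  qed simp
  have "restr p P x = (p ^^ k0) x" using restr_eq_first_return[OF xP k0] nk by blast
  moreover have "restr q P y = (q ^^ k0) y" using restr_eq_first_return[OF yP k0(1)] eq nk k0 by simp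
  ultimately show ?thesis using eq[of k0] k0 by simp
qed

lemma first_in_agree:
  assumes agree: "\<And>z. z \<in> H \<Longrightarrow> z \<notin> P \<Longrightarrow> q z = p z"
    and pH: "\<And>z. z \<in> H \<Longrightarrow> p z \<in> H"
    and rH: "r \<in> H" and ex: "\<exists>i. (p ^^ i) r \<in> P"
  shows "first_in q P r = first_in p P r"
proof -
  define i0 where "i0 = (LEAST i. (p ^^ i) r \<in> P)"
  have i0: "(p ^^ i0) r \<in> P" using LeastI_ex[OF ex] unfolding i0_def by blast
  have ni: "(p ^^ j) r \<notin> P" if "j < i0" for j
    using not_less_Least[of j "\<lambda>i. (p ^^ i) r \<in> P"] that unfolding i0_def by auto
  have inH: "(p ^^ j) r \<in> H" for j by (induction j) (use rH pH in auto)
  have eq: "(q ^^ j) r = (p ^^ j) r" if "j \<le> i0" for j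
    using that
  proof (induction j)
    case (Suc j)
    then have "(q ^^ j) r = (p ^^ j) r" "(p ^^ j) r \<notin> P" using ni[of j] by auto
    then show ?case using agree inH by simp
  qed simp
  have "first_in p P r = (p ^^ i0) r" using first_in_eq_first_hit[OF i0 ni] .
  moreover have "first_in q P r = (q ^^ i0) r" using first_in_eq_first_hit[of i0 q r P] i0 ni eq by simp
  ultimately show ?thesis using eq[of i0] by simp
qed

section \<open>The motion function\<close>

locale premap =
  fixes H :: "'a set" and s a :: "'a \<Rightarrow> 'a" and S :: "'a set"
  assumes finite_H: "finite H" and s_permutes: "s permutes H" and a_permutes: "a permutes H"
    and a_fpf_involution: "\<And>h. h \<in> H \<Longrightarrow> a h \<noteq> h \<and> a (a h) = h"
    and S_subset: "S \<subseteq> H" and a_S: "\<And>h. h \<in> S \<Longrightarrow> a h \<in> S"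
begin

abbreviation "\<theta> \<equiv> motion s a S"
abbreviation "\<phi> \<equiv> face_perm s a"

lemma s_in: "h \<in> H \<Longrightarrow> s h \<in> H" using s_permutes by (simp add: permutes_in_image)
lemma a_in: "h \<in> H \<Longrightarrow> a h \<in> H" using a_permutes by (simp add: permutes_in_image)
lemma a_a: "h \<in> H \<Longrightarrow> a (a h) = h" using a_fpf_involution by simp
lemma a_notin_S: "h \<in> H \<Longrightarrow> h \<notin> S \<Longrightarrow> a h \<notin> S" using a_S a_a by metis

lemma motion_permutes: "\<theta> permutes H"
proof -
  define g where "g h = (if h \<in> S then a h else h)" for h
  have "g permutes H"
    by (rule permutes_if_involution) (use a_S a_a a_in S_subset in \<open>auto simp: g_def\<close>)
  then have "s \<circ> g permutes H" using s_permutes by (rule permutes_compose)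
  moreover have "\<theta> = s \<circ> g" unfolding g_def motion_def by (rule ext) simp
  ultimately show ?thesis by simp
qed

lemma face_perm_permutes: "\<phi> permutes H"
proof -
  have "s \<circ> a permutes H" using a_permutes s_permutes by (rule permutes_compose)
  moreover have "\<phi> = s \<circ> a" unfolding face_perm_def by (rule ext) simp
  ultimately show ?thesis by simp
qed

lemma motion_in: "h \<in> H \<Longrightarrow> \<theta> h \<in> H" using motion_permutes by (simp add: permutes_in_image)
lemma face_perm_in: "h \<in> H \<Longrightarrow> \<phi> h \<in> H" using face_perm_permutes by (simp add: permutes_in_image)

lemma restr_a_S: "h \<in> S \<Longrightarrow> restr a S h = a h" using restr_eq_if_in[of h S a] a_S by simp
lemma restr_a_compl: "h \<in> H - S \<Longrightarrow> restr a (H - S) h = a h" using restr_eq_if_in[of h "H - S" a] a_notin_S a_in by simp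

text \<open>Outside S the motion follows \<sigma>, inside S it follows \<phi>; hence restricting \<theta> to S
  (resp. to its complement) gives the face permutation of M restricted to S
  (resp. of the dual map restricted to the complement).\<close>
lemma restr_motion_S: assumes h: "h \<in> S" shows "restr \<theta> S h = restr s S (a h)"
proof (rule restr_eq_restr_shift[where H=H])
  show "\<And>z. z \<in> H \<Longrightarrow> z \<notin> S \<Longrightarrow> \<theta> z = s z" by (simp add: motion_def)
  show "\<And>z. z \<in> H \<Longrightarrow> s z \<in> H" by (rule s_in)
  show "a h \<in> H" "a h \<in> S" "h \<in> S" using h a_S S_subset by auto
  show "\<theta> h = s (a h)" using h by (simp add: motion_def)
  show "\<exists>k>0. (s ^^ k) (a h) \<in> S"
    using permutes_funpow_return[OF s_permutes finite_H, of "a h"] h a_S by auto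
qed

lemma restr_motion_compl: assumes h: "h \<in> H - S" shows "restr \<theta> (H - S) h = restr \<phi> (H - S) (a h)"
proof (rule restr_eq_restr_shift[where H=H])
  show "\<And>z. z \<in> H \<Longrightarrow> z \<notin> H - S \<Longrightarrow> \<theta> z = \<phi> z" by (simp add: motion_def face_perm_def)
  show "\<And>z. z \<in> H \<Longrightarrow> \<phi> z \<in> H" by (rule face_perm_in)
  show "a h \<in> H" "a h \<in> H - S" "h \<in> H - S" using h a_in a_notin_S by auto
  show "\<theta> h = \<phi> (a h)" using h a_a by (simp add: motion_def face_perm_def)
  show "\<exists>k>0. (\<phi> ^^ k) (a h) \<in> H - S"
    using permutes_funpow_return[OF face_perm_permutes finite_H, of "a h"] h a_in a_notin_S by auto
qed

lemma face_restr_S: "h \<in> S \<Longrightarrow> face_perm (restr s S) (restr a S) h = restr \<theta> S h"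
  using restr_motion_S restr_a_S by (simp add: face_perm_def)

lemma face_restr_compl:
  "h \<in> H - S \<Longrightarrow> face_perm (restr \<phi> (H - S)) (restr a (H - S)) h = restr \<theta> (H - S) h"
  using restr_motion_compl restr_a_compl by (simp add: face_perm_def)

lemma first_in_motion_S:
  assumes "r \<in> H" "\<exists>i. (s ^^ i) r \<in> S" shows "first_in \<theta> S r = first_in s S r"
  by (rule first_in_agree[where H=H]) (use assms s_in in \<open>auto simp: motion_def\<close>)

lemma first_in_motion_compl:
  assumes "r \<in> H" "\<exists>i. (\<theta> ^^ i) r \<in> H - S" shows "first_in \<theta> (H - S) r = first_in \<phi> (H - S) r"
  by (rule sym, rule first_in_agree[where H=H]) (use assms motion_in in \<open>auto simp: motion_def face_perm_def\<close>)

lemma restr_motion_S_in_S: "z \<in> S \<Longrightarrow> restr \<theta> S z \<in> S"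
  by (rule restr_permutes_mem[OF motion_permutes finite_H])

lemma motion_reaches_face_orbit:
  assumes x0: "x0 \<in> S"
  shows "(\<exists>k. (\<theta> ^^ k) x0 = (face_perm (restr s S) (restr a S) ^^ m) x0)
    \<and> (face_perm (restr s S) (restr a S) ^^ m) x0 \<in> S"
proof (induction m)
  case (Suc m)
  let ?F = "face_perm (restr s S) (restr a S)"
  obtain k where k: "(\<theta> ^^ k) x0 = (?F ^^ m) x0" and zS: "(?F ^^ m) x0 \<in> S" using Suc by blast
  define z where "z = (?F ^^ m) x0"
  define j where "j = (LEAST j. j > 0 \<and> (\<theta> ^^ j) z \<in> S)"
  have "?F z = (\<theta> ^^ j) z" using face_restr_S zS unfolding z_def j_def by (simp add: restr_def)
  then have "(\<theta> ^^ (j + k)) x0 = ?F z" using k unfolding z_def by (simp add: funpow_add)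
  moreover have "?F z \<in> S" using face_restr_S restr_motion_S_in_S zS unfolding z_def by simp
  ultimately show ?case unfolding z_def by auto
qed (use x0 in \<open>auto intro: exI[of _ 0]\<close>)

lemma motion_reaches_along_s:
  assumes z: "z \<in> S" and "0 < d" and avoid: "\<forall>j. 0 < j \<longrightarrow> j < d \<longrightarrow> (s ^^ j) z \<notin> S"
  shows "(\<theta> ^^ d) (a z) = (s ^^ d) z"
proof -
  have "(\<theta> ^^ j) (a z) = (s ^^ j) z" if "0 < j" "j \<le> d" for j
    using that
  proof (induction j)
    case (Suc j)
    show ?case
    proof (cases "j = 0")
      case True then show ?thesis using z a_S a_a S_subset by (auto simp: motion_def)
    next
      case False
      then have "(\<theta> ^^ j) (a z) = (s ^^ j) z" "(s ^^ j) z \<notin> S" using Suc avoid by auto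
      then have "(\<theta> ^^ Suc j) (a z) = \<theta> ((s ^^ j) z)" by simp
      also have "\<dots> = s ((s ^^ j) z)" using \<open>(s ^^ j) z \<notin> S\<close> by (simp add: motion_def)
      finally show ?thesis by simp
    qed
  qed simp
  then show ?thesis using assms by simp
qed

lemma motion_cyclic:
  assumes cov: "(\<forall>h\<in>H. \<exists>k. (s ^^ k) h \<in> S) \<or> (S = {} \<and> is_cyclic s H)"
    and face_cyclic: "is_cyclic (face_perm (restr s S) (restr a S)) S"
  shows "is_cyclic \<theta> H"
proof (cases "S = {}")
  case True
  have "\<theta> = s" unfolding motion_def True by (rule ext) simp
  then show ?thesis using cov True by (cases "H = {}") (auto simp: is_cyclic_def)
next
  case False
  then obtain x0 where x0: "x0 \<in> S" by blast
  have hits_S: "\<exists>k. (s ^^ k) h \<in> S" if "h \<in> H" for h using cov False that by blast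
  have reach_S: "\<exists>k. (\<theta> ^^ k) x0 = z" if z: "z \<in> S" for z
  proof -
    obtain m where "(face_perm (restr s S) (restr a S) ^^ m) x0 = z"
      using face_cyclic x0 z unfolding is_cyclic_def by blast
    then show ?thesis using motion_reaches_face_orbit[OF x0, of m] by auto
  qed
  show ?thesis
  proof (rule is_cyclic_if_reaches_all[OF motion_permutes finite_H])
    fix y assume y: "y \<in> H"
    show "\<exists>k. (\<theta> ^^ k) x0 = y"
    proof (cases "y \<in> S")
      case False
      obtain z d where zd: "z \<in> S" "0 < d" "(s ^^ d) z = y" "\<forall>j. 0 < j \<longrightarrow> j < d \<longrightarrow> (s ^^ j) z \<notin> S"
        using exists_last_visit_before[OF s_permutes finite_H False hits_S[OF y]] by blast
      obtain k where "(\<theta> ^^ k) x0 = a z" using reach_S a_S zd(1) by blast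
      then have "(\<theta> ^^ (d + k)) x0 = y"
        using motion_reaches_along_s[OF zd(1,2,4)] zd(3) by (simp add: funpow_add)
      then show ?thesis by blast
    qed (use reach_S in blast)
  qed
qed

end


section \<open>Codes of covered maps\<close>

lemma distinct_if_distinct_filters:
  "distinct (filter P xs) \<Longrightarrow> distinct (filter (\<lambda>x. \<not> P x) xs) \<Longrightarrow> distinct xs"
  by (induction xs) (auto split: if_splits)

lemma code_shuffle_distinct: "code_shuffle k l w \<Longrightarrow> distinct w"
proof -
  assume "code_shuffle k l w"
  then have "distinct (filter isA w)" "distinct (filter isB w)"
    unfolding code_shuffle_def ucode_def by blast+
  moreover have "filter isB w = filter (\<lambda>x. \<not> isA x) w" by (rule filter_cong) (simp_all add: isB_iff_not_isA)
  ultimately show "distinct w" using distinct_if_distinct_filters by metis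
qed

lemma filter_map_eq_map_filter:
  assumes "\<And>h. h \<in> set L \<Longrightarrow> Q (f h) \<longleftrightarrow> h \<in> P"
  shows "filter Q (map f L) = map f (filter (\<lambda>x. x \<in> P) L)"
  using assms by (induction L) auto

lemma covered_code_length: "covered_code H s a r S w \<Longrightarrow> length w = card H"
proof -
  assume cc: "covered_code H s a r S w"
  then have "code_shuffle (card S div 2) (card (H - S) div 2) w" by (simp add: covered_code_def)
  moreover obtain f where "bij_betw f H (set w)" using cc unfolding covered_code_def by blast
  ultimately show ?thesis using bij_betw_same_card distinct_card code_shuffle_distinct by metis
qed

lemma (in cyclic_list) umap_code_map_filtered:
  assumes ucode: "ucode c cb (card P div 2) (map f (filtered P))"
    and P: "P \<subseteq> set L" and inj: "inj_on f P"
    and b: "\<And>h. h \<in> P \<Longrightarrow> f (b h) = bar (f h)"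
    and face: "\<And>h. h \<in> P \<Longrightarrow> face_perm t b h = restr p P h"
    and root: "P \<noteq> {} \<Longrightarrow> \<rho> = first_in p P (L ! 0)"
  shows "umap_code c cb P t b \<rho> (map f (filtered P))"
  unfolding umap_code_def
proof (intro conjI exI[of _ f])
  have set_filtered: "set (filtered P) = P" using P by auto
  then show "bij_betw f P (set (map f (filtered P)))" using inj by (simp add: bij_betw_def)
  show "\<forall>h\<in>P. \<forall>i<length (map f (filtered P)). f h = map f (filtered P) ! i
      \<longrightarrow> f (face_perm t b h) = map f (filtered P) ! (Suc i mod length (map f (filtered P)))"
  proof (intro ballI allI impI)
    fix h i assume h: "h \<in> P" and i: "i < length (map f (filtered P))"
      and eq: "f h = map f (filtered P) ! i"
    have "filtered P ! i \<in> P" using i set_filtered nth_mem by fastforce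
    then have "h = filtered P ! i" using inj h eq i by (simp add: inj_on_def)
    then have "face_perm t b h = filtered P ! (Suc i mod length (filtered P))"
      using face[OF h] restr_nth_filter i by simp
    moreover have "0 < length (filtered P)" using i length_map[of f "filtered P"] by linarith
    then have "Suc i mod length (filtered P) < length (filtered P)" by simp
    ultimately show "f (face_perm t b h) = map f (filtered P) ! (Suc i mod length (map f (filtered P)))"
      by simp
  qed
  show "P \<noteq> {} \<longrightarrow> f \<rho> = map f (filtered P) ! 0"
    using root first_in_filter set_filtered by (metis length_greater_0_conv nth_map set_empty)
qed (use ucode b in simp_all)

lemma covered_map_premap: "covered_map H s a r S \<Longrightarrow> premap H s a S"
  unfolding covered_map_def is_map_def premap_def by (auto simp: image_subset_iff)

locale nonempty_covered_map = premap +
  fixes r :: 'a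
  assumes covered: "covered_map H s a r S" and H_nonempty: "H \<noteq> {}"
begin

lemma r_in: "r \<in> H" using covered H_nonempty by (simp add: covered_map_def is_map_def)

lemma connecting: "(\<forall>h\<in>H. \<exists>k. (s ^^ k) h \<in> S) \<or> (S = {} \<and> is_cyclic s H)"
  using covered by (simp add: covered_map_def)

lemma motion_is_cyclic: "is_cyclic \<theta> H"
  using motion_cyclic connecting covered by (simp add: covered_map_def)

definition orbit :: "'a list" where
  "orbit = map (\<lambda>i. (\<theta> ^^ i) r) [0..<card H]"

lemma orbit: "distinct orbit" "set orbit = H" "length orbit = card H"
    "\<And>i. i < card H \<Longrightarrow> \<theta> (orbit ! i) = orbit ! (Suc i mod card H)" "orbit ! 0 = r"
  using orbit_list_of_cyclic[OF motion_permutes finite_H r_in motion_is_cyclic] unfolding orbit_def by auto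

lemma cyclic_list_orbit: "cyclic_list \<theta> orbit"
  unfolding cyclic_list_def using orbit H_nonempty finite_H by auto

abbreviation "orbit_S \<equiv> filter (\<lambda>x. x \<in> S) orbit"
abbreviation "orbit_compl \<equiv> filter (\<lambda>x. x \<in> H - S) orbit"

lemma set_orbit_S: "set orbit_S = S" using orbit S_subset by auto
lemma set_orbit_compl: "set orbit_compl = H - S" using orbit by auto
lemma length_orbit_S: "length orbit_S = card S" using set_orbit_S orbit distinct_card[of orbit_S] by simp
lemma length_orbit_compl: "length orbit_compl = card (H - S)"
  using set_orbit_compl orbit distinct_card[of orbit_compl] by simp

lemma involution_list_S: "involution_list LA LAb orbit_S a"
  unfolding involution_list_def involution_list_axioms_def fpf_involution_on_def
  using alphabet_A set_orbit_S a_S a_fpf_involution S_subset orbit(1) by auto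

lemma involution_list_compl: "involution_list LB LBb orbit_compl a"
  unfolding involution_list_def involution_list_axioms_def fpf_involution_on_def
  using alphabet_B set_orbit_compl a_notin_S a_fpf_involution a_in orbit(1) by auto

definition code_label :: "'a \<Rightarrow> letter" where
  "code_label h = (if h \<in> S then canonical_label LA LAb orbit_S a h
                   else canonical_label LB LBb orbit_compl a h)"

definition code_word :: "letter list" where
  "code_word = map code_label orbit"

lemma isA_code_label: "isA (code_label h) \<longleftrightarrow> h \<in> S"
  by (simp add: code_label_def canonical_label_def)

lemma filter_map_isA: "filter isA (map f orbit) = map f orbit_S" if "\<And>h. h \<in> H \<Longrightarrow> isA (f h) \<longleftrightarrow> h \<in> S"
  by (rule filter_map_eq_map_filter) (use that orbit in auto)

lemma filter_map_isB: "filter isB (map f orbit) = map f orbit_compl" if "\<And>h. h \<in> H \<Longrightarrow> isA (f h) \<longleftrightarrow> h \<in> S"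
  by (rule filter_map_eq_map_filter) (use that orbit isB_iff_not_isA in auto)

lemma code_shuffle_code_word: "code_shuffle (card S div 2) (card (H - S) div 2) code_word"
proof -
  have map_S: "map code_label orbit_S = map (canonical_label LA LAb orbit_S a) orbit_S"
    using set_orbit_S unfolding code_label_def by simp
  have map_compl: "map code_label orbit_compl = map (canonical_label LB LBb orbit_compl a) orbit_compl"
    using set_orbit_compl unfolding code_label_def by auto
  have "ucode LA LAb (card S div 2) (map code_label orbit_S)"
    unfolding map_S using involution_list.ucode_map_label[OF involution_list_S] length_orbit_S by simp
  moreover have "ucode LB LBb (card (H - S) div 2) (map code_label orbit_compl)"
    unfolding map_compl using involution_list.ucode_map_label[OF involution_list_compl] length_orbit_compl
    by simp
  ultimately show ?thesis
    unfolding code_shuffle_def code_word_def filter_map_isA[OF isA_code_label] filter_map_isB[OF isA_code_label]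
    by simp
qed

lemma inj_on_code_label: "inj_on code_label H"
  using code_shuffle_distinct[OF code_shuffle_code_word] orbit(2) unfolding code_word_def
  by (simp add: distinct_map)

lemma code_label_a: "h \<in> H \<Longrightarrow> code_label (a h) = bar (code_label h)"
  using involution_list.label_\<alpha>[OF involution_list_S, of h] involution_list.label_\<alpha>[OF involution_list_compl, of h]
    set_orbit_S set_orbit_compl a_S a_notin_S a_in unfolding code_label_def by auto

lemma covered_code_code_word: "covered_code H s a r S code_word"
  unfolding covered_code_def
proof (intro conjI exI[of _ code_label])
  show "code_shuffle (card S div 2) (card (H - S) div 2) code_word" by (rule code_shuffle_code_word)
  show "bij_betw code_label H (set code_word)"
    using inj_on_code_label orbit(2) unfolding code_word_def bij_betw_def by simp
  show "\<forall>h\<in>H. isA (code_label h) = (h \<in> S)" using isA_code_label by simp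
  show "\<forall>h\<in>H. code_label (a h) = bar (code_label h)" using code_label_a by simp
  show "H \<noteq> {} \<longrightarrow> code_label r = code_word ! 0"
    using orbit H_nonempty finite_H unfolding code_word_def by (simp add: card_gt_0_iff)
  show "\<forall>h\<in>H. \<forall>i<length code_word. code_label h = code_word ! i
      \<longrightarrow> code_label (\<theta> h) = code_word ! (Suc i mod length code_word)"
  proof (intro ballI allI impI)
    fix h i assume h: "h \<in> H" and i: "i < length code_word" and eq: "code_label h = code_word ! i"
    have i_card: "i < card H" using i orbit unfolding code_word_def by simp
    then have "h = orbit ! i"
      using eq h inj_on_code_label orbit unfolding code_word_def by (metis inj_on_def nth_map nth_mem)
    then show "code_label (\<theta> h) = code_word ! (Suc i mod length code_word)"
      using orbit(3,4) i_card unfolding code_word_def by simp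
  qed
qed

lemma covered_code_eq_map_orbit:
  assumes "covered_code H s a r S w"
  obtains f where "w = map f orbit" "inj_on f H" "\<forall>h\<in>H. isA (f h) \<longleftrightarrow> h \<in> S"
    "\<forall>h\<in>H. f (a h) = bar (f h)" "code_shuffle (card S div 2) (card (H - S) div 2) w"
proof -
  obtain f where shuffle: "code_shuffle (card S div 2) (card (H - S) div 2) w"
    and bij: "bij_betw f H (set w)" and isA: "\<forall>h\<in>H. isA (f h) \<longleftrightarrow> h \<in> S"
    and fa: "\<forall>h\<in>H. f (a h) = bar (f h)"
    and f_motion: "\<forall>h\<in>H. \<forall>i<length w. f h = w ! i \<longrightarrow> f (\<theta> h) = w ! (Suc i mod length w)"
    and f_root: "H \<noteq> {} \<longrightarrow> f r = w ! 0"
    using assms unfolding covered_code_def by blast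
  have len: "length w = card H" using covered_code_length[OF assms] .
  have nth: "w ! i = f (orbit ! i)" if "i < card H" for i
    using that
  proof (induction i)
    case 0 then show ?case using f_root H_nonempty orbit by simp
  next
    case (Suc i)
    have "orbit ! i \<in> H" using orbit Suc by (metis Suc_lessD nth_mem)
    moreover have "i < length w" "f (orbit ! i) = w ! i" using Suc len by simp_all
    ultimately have "f (\<theta> (orbit ! i)) = w ! (Suc i mod length w)" using f_motion by blast
    then show ?case using orbit(4)[of i] Suc len by simp
  qed
  have "w = map f orbit" by (rule nth_equalityI) (use len orbit nth in auto)
  then show ?thesis using that bij_betw_imp_inj_on[OF bij] isA fa shuffle by blast
qed

lemma covered_code_unique:
  assumes "covered_code H s a r S w" shows "w = code_word"
proof -
  obtain f where w: "w = map f orbit" and inj: "inj_on f H" and isA: "\<forall>h\<in>H. isA (f h) \<longleftrightarrow> h \<in> S"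
    and fa: "\<forall>h\<in>H. f (a h) = bar (f h)" and shuffle: "code_shuffle (card S div 2) (card (H - S) div 2) w"
    using covered_code_eq_map_orbit[OF assms] by blast
  have ucode_S: "ucode LA LAb (length orbit_S div 2) (map f orbit_S)"
    using shuffle filter_map_isA[of f] isA length_orbit_S unfolding w by (simp add: code_shuffle_def)
  have inj_S: "inj_on f (set orbit_S)" using inj set_orbit_S S_subset inj_on_subset by metis
  have fa_S: "f (a x) = bar (f x)" if "x \<in> set orbit_S" for x using fa set_orbit_S S_subset that by auto
  have ucode_compl: "ucode LB LBb (length orbit_compl div 2) (map f orbit_compl)"
    using shuffle filter_map_isB[of f] isA length_orbit_compl unfolding w by (simp add: code_shuffle_def)
  have inj_compl: "inj_on f (set orbit_compl)" using inj set_orbit_compl inj_on_subset by (metis Diff_subset)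
  have fa_compl: "f (a x) = bar (f x)" if "x \<in> set orbit_compl" for x using fa set_orbit_compl that by auto
  have "f h = canonical_label LA LAb orbit_S a h" if "h \<in> S" for h
    using involution_list.canonical_label_unique[OF involution_list_S ucode_S inj_S fa_S] set_orbit_S that
    by blast
  moreover have "f h = canonical_label LB LBb orbit_compl a h" if "h \<in> H - S" for h
    using involution_list.canonical_label_unique[OF involution_list_compl ucode_compl inj_compl fa_compl]
      set_orbit_compl that by blast
  ultimately have "\<forall>h\<in>H. f h = code_label h" unfolding code_label_def by auto
  then show ?thesis unfolding w code_word_def using orbit(2) by simp
qed

lemma umap_code_restr_S:
  assumes "covered_code H s a r S w"
  shows "umap_code LA LAb S (restr s S) (restr a S) (first_in s S r) (filter isA w)"
proof -
  obtain f where w: "w = map f orbit" and inj: "inj_on f H" and isA: "\<forall>h\<in>H. isA (f h) \<longleftrightarrow> h \<in> S"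
    and fa: "\<forall>h\<in>H. f (a h) = bar (f h)" and shuffle: "code_shuffle (card S div 2) (card (H - S) div 2) w"
    using covered_code_eq_map_orbit[OF assms] by blast
  have filter_w: "filter isA w = map f orbit_S" unfolding w using filter_map_isA isA by blast
  have "first_in s S r = first_in \<theta> S (orbit ! 0)" if "S \<noteq> {}"
    using first_in_motion_S[OF r_in] connecting that orbit(5) r_in by auto
  then show ?thesis unfolding filter_w
    by (intro cyclic_list.umap_code_map_filtered[OF cyclic_list_orbit])
      (use shuffle filter_w inj S_subset orbit(2) fa restr_a_S face_restr_S in
        \<open>auto simp: code_shuffle_def intro: inj_on_subset\<close>)
qed

lemma umap_code_restr_compl:
  assumes "covered_code H s a r S w"
  shows "umap_code LB LBb (H - S) (restr \<phi> (H - S)) (restr a (H - S)) (first_in \<phi> (H - S) r) (filter isB w)"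
proof -
  obtain f where w: "w = map f orbit" and inj: "inj_on f H" and isA: "\<forall>h\<in>H. isA (f h) \<longleftrightarrow> h \<in> S"
    and fa: "\<forall>h\<in>H. f (a h) = bar (f h)" and shuffle: "code_shuffle (card S div 2) (card (H - S) div 2) w"
    using covered_code_eq_map_orbit[OF assms] by blast
  have filter_w: "filter isB w = map f orbit_compl" unfolding w using filter_map_isB isA by blast
  have "first_in \<phi> (H - S) r = first_in \<theta> (H - S) (orbit ! 0)" if ne: "H - S \<noteq> {}"
  proof -
    obtain y where y: "y \<in> H - S" using ne by blast
    then obtain k where "(\<theta> ^^ k) r = y" using motion_is_cyclic r_in unfolding is_cyclic_def by blast
    then have "\<exists>i. (\<theta> ^^ i) r \<in> H - S" using y by blast
    then show ?thesis using first_in_motion_compl[OF r_in] orbit(5) by simp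
  qed
  then show ?thesis unfolding filter_w
    by (intro cyclic_list.umap_code_map_filtered[OF cyclic_list_orbit])
      (use shuffle filter_w inj orbit(2) fa restr_a_compl face_restr_compl in
        \<open>auto simp: code_shuffle_def intro: inj_on_subset\<close>)
qed

end


section \<open>A code determines its covered map\<close>

definition next_letter :: "letter list \<Rightarrow> letter \<Rightarrow> letter" where
  "next_letter w x = w ! (Suc (index_of w x) mod length w)"

text \<open>On S the vertex permutation is \<sigma> = \<theta> \<circ> \<alpha>, elsewhere \<sigma> = \<theta>; in the code, \<theta> is the
  cyclic shift and \<alpha> is bar.\<close>
definition vertex_letter :: "letter list \<Rightarrow> letter \<Rightarrow> letter" where
  "vertex_letter w x = (if isA x then next_letter w (bar x) else next_letter w x)"

lemma covered_code_vertex_letter: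
  assumes cm: "covered_map H s a r S" and cc: "covered_code H s a r S w"
  obtains f where "bij_betw f H (set w)" "\<forall>h\<in>H. isA (f h) \<longleftrightarrow> h \<in> S"
    "\<forall>h\<in>H. f (a h) = bar (f h)" "\<forall>h\<in>H. f (s h) = vertex_letter w (f h)" "H \<noteq> {} \<longrightarrow> f r = w ! 0"
proof -
  interpret premap H s a S using covered_map_premap[OF cm] .
  obtain f where bij: "bij_betw f H (set w)" and isA: "\<forall>h\<in>H. isA (f h) \<longleftrightarrow> h \<in> S"
    and fa: "\<forall>h\<in>H. f (a h) = bar (f h)"
    and f_motion: "\<forall>h\<in>H. \<forall>i<length w. f h = w ! i \<longrightarrow> f (\<theta> h) = w ! (Suc i mod length w)"
    and f_root: "H \<noteq> {} \<longrightarrow> f r = w ! 0"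
    using cc unfolding covered_code_def by blast
  have f_next: "f (\<theta> h) = next_letter w (f h)" if h: "h \<in> H" for h
  proof -
    have "f h \<in> set w" using bij h by (auto simp: bij_betw_def)
    then have "index_of w (f h) < length w" "f h = w ! index_of w (f h)"
      using index_of_less_length_and_nth[of "f h" w] by simp_all
    then show ?thesis unfolding next_letter_def using f_motion h by blast
  qed
  have "f (s h) = vertex_letter w (f h)" if h: "h \<in> H" for h
  proof (cases "h \<in> S")
    case True
    then have "a h \<in> H" "\<theta> (a h) = s h" using a_S S_subset a_a h by (auto simp: motion_def)
    then show ?thesis using f_next[of "a h"] fa isA h True unfolding vertex_letter_def by simp
  next
    case False
    then show ?thesis using f_next[OF h] isA h unfolding vertex_letter_def by (simp add: motion_def)
  qed
  then show ?thesis using that bij isA fa f_root by blast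
qed

lemma bij_betw_inv_into_comp:
  assumes f: "bij_betw f H X" and g: "bij_betw g H' X"
  shows "bij_betw (inv_into H' g \<circ> f) H H'" and "h \<in> H \<Longrightarrow> g ((inv_into H' g \<circ> f) h) = f h"
proof -
  show "bij_betw (inv_into H' g \<circ> f) H H'" using bij_betw_trans[OF f bij_betw_inv_into[OF g]] .
  assume "h \<in> H"
  then have "f h \<in> g ` H'" using f g by (auto simp: bij_betw_def)
  then show "g ((inv_into H' g \<circ> f) h) = f h" by (simp add: f_inv_into_f)
qed

lemma iso_covered_if_common_labelling:
  assumes f: "bij_betw f H X" and g: "bij_betw g H' X"
    and s: "\<And>h. h \<in> H \<Longrightarrow> s h \<in> H \<and> f (s h) = \<sigma> (f h)"
    and s': "\<And>h. h \<in> H' \<Longrightarrow> s' h \<in> H' \<and> g (s' h) = \<sigma> (g h)"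
    and a: "\<And>h. h \<in> H \<Longrightarrow> a h \<in> H \<and> f (a h) = \<beta> (f h)"
    and a': "\<And>h. h \<in> H' \<Longrightarrow> a' h \<in> H' \<and> g (a' h) = \<beta> (g h)"
    and S: "\<And>h. h \<in> H \<Longrightarrow> Q (f h) \<longleftrightarrow> h \<in> S" and S': "\<And>h. h \<in> H' \<Longrightarrow> Q (g h) \<longleftrightarrow> h \<in> S'"
    and SH: "S \<subseteq> H" and SH': "S' \<subseteq> H'"
    and root: "H \<noteq> {} \<Longrightarrow> r \<in> H \<and> r' \<in> H' \<and> f r = g r'"
  shows "iso_covered H s a r S H' s' a' r' S'"
proof -
  define F where "F = inv_into H' g \<circ> f"
  have F_bij: "bij_betw F H H'" and g_F: "\<And>h. h \<in> H \<Longrightarrow> g (F h) = f h"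
    unfolding F_def using bij_betw_inv_into_comp[OF f g] by auto
  have F_in: "F h \<in> H'" if "h \<in> H" for h using F_bij that by (auto simp: bij_betw_def)
  have F_eq: "F h = x" if "h \<in> H" "x \<in> H'" "g x = f h" for h x
    using g_F[OF that(1)] that F_in[OF that(1)] bij_betw_imp_inj_on[OF g] by (auto simp: inj_on_def)
  have "F ` S = S'"
  proof (intro equalityI subsetI)
    fix x assume "x \<in> F ` S"
    then obtain h where h: "h \<in> S" "x = F h" by blast
    then have "h \<in> H" using SH by auto
    then have "Q (g (F h))" using S g_F h by simp
    then show "x \<in> S'" using S' F_in \<open>h \<in> H\<close> h by simp
  next
    fix x assume x: "x \<in> S'"
    then have "x \<in> H'" using SH' by auto
    then obtain h where h: "h \<in> H" "f h = g x" using f g by (metis bij_betw_def imageE image_eqI)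
    then show "x \<in> F ` S" using S S' x F_eq \<open>x \<in> H'\<close> by (metis image_eqI)
  qed
  then show ?thesis unfolding iso_covered_def
    using F_bij F_eq F_in g_F s s' a a' root by (intro exI[of _ F]) auto
qed

lemma covered_code_iso:
  assumes cm: "covered_map H s a r S" and cm': "covered_map H' s' a' r' S'"
    and cc: "covered_code H s a r S w" and cc': "covered_code H' s' a' r' S' w"
  shows "iso_covered H s a r S H' s' a' r' S'"
proof -
  interpret M: premap H s a S using covered_map_premap[OF cm] .
  interpret M': premap H' s' a' S' using covered_map_premap[OF cm'] .
  obtain f where f: "bij_betw f H (set w)" "\<forall>h\<in>H. isA (f h) \<longleftrightarrow> h \<in> S"
    "\<forall>h\<in>H. f (a h) = bar (f h)" "\<forall>h\<in>H. f (s h) = vertex_letter w (f h)" "H \<noteq> {} \<longrightarrow> f r = w ! 0"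
    using covered_code_vertex_letter[OF cm cc] by blast
  obtain g where g: "bij_betw g H' (set w)" "\<forall>h\<in>H'. isA (g h) \<longleftrightarrow> h \<in> S'"
    "\<forall>h\<in>H'. g (a' h) = bar (g h)" "\<forall>h\<in>H'. g (s' h) = vertex_letter w (g h)" "H' \<noteq> {} \<longrightarrow> g r' = w ! 0"
    using covered_code_vertex_letter[OF cm' cc'] by blast
  have "r \<in> H \<and> r' \<in> H' \<and> f r = g r'" if "H \<noteq> {}"
  proof -
    have "H' \<noteq> {}" using that f(1) g(1) by (auto simp: bij_betw_def)
    then show ?thesis using that f(5) g(5) cm cm' by (auto simp: covered_map_def is_map_def)
  qed
  then show ?thesis
    using iso_covered_if_common_labelling[OF f(1) g(1), of s "vertex_letter w" s' a bar a' isA S S' r r']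
      f g M.s_in M.a_in M'.s_in M'.a_in M.S_subset M'.S_subset by blast
qed


section \<open>Every code-shuffle is a code\<close>

lemma code_shuffle_bar_mem:
  assumes cs: "code_shuffle k l w" and x: "x \<in> set w" shows "bar x \<in> set w"
proof (cases "isA x")
  case True
  moreover have "ucode LA LAb k (filter isA w)" using cs by (simp add: code_shuffle_def)
  ultimately have "bar x \<in> set (filter isA w)" using alphabet.ucode_bar_mem[OF alphabet_A, of k "filter isA w" x] x by simp
  then show ?thesis by simp
next
  case False
  then have "isB x" using isB_iff_not_isA by simp
  moreover have "ucode LB LBb l (filter isB w)" using cs by (simp add: code_shuffle_def)
  ultimately have "bar x \<in> set (filter isB w)" using alphabet.ucode_bar_mem[OF alphabet_B, of l "filter isB w" x] x by simp
  then show ?thesis by simp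
qed

lemma funpow_eq_on:
  assumes "\<And>z. z \<in> X \<Longrightarrow> f z = g z \<and> g z \<in> X" "z \<in> X"
  shows "(f ^^ j) z = (g ^^ j) z \<and> (g ^^ j) z \<in> X"
  using assms by (induction j) auto

lemma transitive_on_if_cyclic_steps:
  assumes cyc: "is_cyclic t X"
    and step: "\<And>z. z \<in> X \<Longrightarrow> t z \<in> X \<and> (z, t z) \<in> (gen_rel p q X)\<^sup>*"
  shows "transitive_on p q X"
proof -
  have iter: "(z, (t ^^ j) z) \<in> (gen_rel p q X)\<^sup>* \<and> (t ^^ j) z \<in> X" if "z \<in> X" for z j
  proof (induction j)
    case (Suc j)
    then show ?case using step[of "(t ^^ j) z"] by (auto intro: rtrancl_trans)
  qed (use that in simp)
  show ?thesis unfolding transitive_on_def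
  proof (intro ballI)
    fix x y assume "x \<in> X" "y \<in> X"
    then obtain j where "(t ^^ j) x = y" using cyc unfolding is_cyclic_def by blast
    then show "(x, y) \<in> (gen_rel p q X)\<^sup>*" using iter[OF \<open>x \<in> X\<close>, of j] by simp
  qed
qed

lemma transitive_on_if_face_cyclic:
  assumes cyc: "is_cyclic (face_perm p q) X"
    and qX: "\<And>z. z \<in> X \<Longrightarrow> q z \<in> X" and pX: "\<And>z. z \<in> X \<Longrightarrow> p z \<in> X"
  shows "transitive_on p q X"
proof (rule transitive_on_if_cyclic_steps[OF cyc])
  fix z assume z: "z \<in> X"
  have "(z, q z) \<in> gen_rel p q X" "(q z, p (q z)) \<in> gen_rel p q X"
    using z qX[OF z] unfolding gen_rel_def by blast+
  then show "face_perm p q z \<in> X \<and> (z, face_perm p q z) \<in> (gen_rel p q X)\<^sup>*"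
    using pX qX z unfolding face_perm_def by (meson converse_rtrancl_into_rtrancl r_into_rtrancl)
qed

context premap begin

lemma transitive_on_if_motion_cyclic:
  assumes cyc: "is_cyclic \<theta> H"
  shows "transitive_on s a H"
proof (rule transitive_on_if_cyclic_steps[OF cyc])
  fix h assume h: "h \<in> H"
  have "(h, \<theta> h) \<in> (gen_rel s a H)\<^sup>*"
  proof (cases "h \<in> S")
    case True
    have "(h, a h) \<in> gen_rel s a H" "(a h, s (a h)) \<in> gen_rel s a H"
      using h a_in[OF h] unfolding gen_rel_def by blast+
    then show ?thesis using True by (simp add: motion_def)
  next
    case False
    have "(h, s h) \<in> gen_rel s a H" using h unfolding gen_rel_def by blast
    then show ?thesis using False by (simp add: motion_def)
  qed
  then show "\<theta> h \<in> H \<and> (h, \<theta> h) \<in> (gen_rel s a H)\<^sup>*" using motion_in[OF h] by simp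
qed

lemma face_restr_cyclic_if_restr_motion_cyclic:
  assumes "is_cyclic (restr \<theta> S) S"
  shows "is_cyclic (face_perm (restr s S) (restr a S)) S"
  unfolding is_cyclic_def
proof (intro ballI)
  fix x y assume x: "x \<in> S" and y: "y \<in> S"
  then obtain j where "(restr \<theta> S ^^ j) x = y" using assms unfolding is_cyclic_def by blast
  moreover have "(face_perm (restr s S) (restr a S) ^^ j) x = (restr \<theta> S ^^ j) x"
    using funpow_eq_on[of S "face_perm (restr s S) (restr a S)" "restr \<theta> S" x j]
      face_restr_S restr_motion_S_in_S x by blast
  ultimately show "\<exists>k. (face_perm (restr s S) (restr a S) ^^ k) x = y" by metis
qed

lemma connecting_if_motion_cyclic:
  assumes cyc: "is_cyclic \<theta> H"
  shows "(\<forall>h\<in>H. \<exists>k. (s ^^ k) h \<in> S) \<or> (S = {} \<and> is_cyclic s H)"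
proof (cases "S = {}")
  case True
  have "\<theta> = s" unfolding True motion_def by (rule ext) simp
  then show ?thesis using True cyc by simp
next
  case False
  then obtain x0 where x0: "x0 \<in> S" by blast
  have "\<exists>k. (s ^^ k) h \<in> S" if h: "h \<in> H" for h
  proof -
    obtain i where "(\<theta> ^^ i) h = x0" using cyc h x0 S_subset unfolding is_cyclic_def by blast
    then have hits: "\<exists>i. (\<theta> ^^ i) h \<in> S" using x0 by blast
    have "first_in s S h = first_in \<theta> S h"
      by (rule first_in_agree[where H=H]) (use h hits motion_in in \<open>auto simp: motion_def\<close>)
    moreover have "first_in \<theta> S h \<in> S" unfolding first_in_def by (rule LeastI_ex[OF hits])
    ultimately show ?thesis unfolding first_in_def by metis
  qed
  then show ?thesis by blast
qed

end

text \<open>The covered map built from a code-shuffle w has the positions of w as half-edges, the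
  cyclic shift as motion function and \<alpha> matching each letter with its bar.\<close>
locale code_shuffle_model =
  fixes k l :: nat and w :: "letter list"
  assumes code_shuffle: "code_shuffle k l w"
begin

abbreviation "N \<equiv> length w"
abbreviation "Hw \<equiv> {0..<N}"

definition bar_pos :: "nat \<Rightarrow> nat" where
  "bar_pos i = (if i < N then index_of w (bar (w ! i)) else i)"

definition shift :: "nat \<Rightarrow> nat" where
  "shift i = (if i < N then Suc i mod N else i)"

definition Sw :: "nat set" where
  "Sw = {i. i < N \<and> isA (w ! i)}"

definition swap_A :: "nat \<Rightarrow> nat" where
  "swap_A i = (if i < N \<and> isA (w ! i) then bar_pos i else i)"

definition sigma_w :: "nat \<Rightarrow> nat" where
  "sigma_w = shift \<circ> swap_A"

lemma distinct_w: "distinct w" using code_shuffle_distinct[OF code_shuffle] .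

lemma bar_nth_mem: "i < N \<Longrightarrow> bar (w ! i) \<in> set w" using code_shuffle_bar_mem[OF code_shuffle] by simp

lemma bar_pos_less: "i < N \<Longrightarrow> bar_pos i < N"
  using index_of_less_length_and_nth(1)[OF bar_nth_mem] unfolding bar_pos_def by simp

lemma nth_bar_pos: "i < N \<Longrightarrow> w ! bar_pos i = bar (w ! i)"
  using index_of_less_length_and_nth(2)[OF bar_nth_mem] unfolding bar_pos_def by simp

lemma bar_pos_bar_pos: "bar_pos (bar_pos i) = i"
proof (cases "i < N")
  case True
  then have "bar_pos (bar_pos i) = index_of w (bar (w ! bar_pos i))" using bar_pos_less unfolding bar_pos_def by simp
  also have "\<dots> = i" using nth_bar_pos True index_of_nth[OF distinct_w True] by simp
  finally show ?thesis .
qed (simp add: bar_pos_def)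

lemma bar_pos_neq: "i < N \<Longrightarrow> bar_pos i \<noteq> i" using nth_bar_pos bar_neq by metis

lemma bar_pos_permutes: "bar_pos permutes Hw"
proof (rule permutes_if_involution)
  show "\<And>x. x \<in> Hw \<Longrightarrow> bar_pos x \<in> Hw \<and> bar_pos (bar_pos x) = x" using bar_pos_less bar_pos_bar_pos by simp
qed (simp add: bar_pos_def)

lemma isA_nth_bar_pos: "i < N \<Longrightarrow> isA (w ! bar_pos i) = isA (w ! i)" using nth_bar_pos by simp

lemma shift_less: assumes "i < N" shows "shift i < N"
proof -
  have "0 < N" using assms by linarith
  then show ?thesis using assms unfolding shift_def by simp
qed

lemma shift_permutes: "shift permutes Hw"
proof (rule bij_imp_permutes)
  have "inj_on shift Hw"
  proof (rule inj_onI)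
    fix i j assume "i \<in> Hw" "j \<in> Hw" "shift i = shift j"
    then show "i = j" unfolding shift_def by (auto simp: mod_Suc split: if_splits)
  qed
  moreover have "shift ` Hw = Hw" by (rule endo_inj_surj) (use calculation shift_less in auto)
  ultimately show "bij_betw shift Hw Hw" by (simp add: bij_betw_def)
qed (simp add: shift_def)

lemma swap_A_permutes: "swap_A permutes Hw"
proof (rule permutes_if_involution)
  show "\<And>x. x \<in> Hw \<Longrightarrow> swap_A x \<in> Hw \<and> swap_A (swap_A x) = x"
    using bar_pos_less bar_pos_bar_pos isA_nth_bar_pos by (simp add: swap_A_def)
qed (simp add: swap_A_def)

lemma sigma_w_permutes: "sigma_w permutes Hw"
  unfolding sigma_w_def by (rule permutes_compose[OF swap_A_permutes shift_permutes])

lemma premap_model: "premap Hw sigma_w bar_pos Sw"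
proof unfold_locales
  show "\<And>h. h \<in> Hw \<Longrightarrow> bar_pos h \<noteq> h \<and> bar_pos (bar_pos h) = h" using bar_pos_neq bar_pos_bar_pos by simp
  show "\<And>h. h \<in> Sw \<Longrightarrow> bar_pos h \<in> Sw" using bar_pos_less isA_nth_bar_pos by (simp add: Sw_def)
qed (use sigma_w_permutes bar_pos_permutes in \<open>auto simp: Sw_def\<close>)

lemma motion_model: "motion sigma_w bar_pos Sw = shift"
proof (rule ext)
  fix i
  show "motion sigma_w bar_pos Sw i = shift i"
  proof (cases "i \<in> Sw")
    case True
    then have "i < N" "isA (w ! i)" by (auto simp: Sw_def)
    then have "swap_A (bar_pos i) = i" using bar_pos_less isA_nth_bar_pos bar_pos_bar_pos by (simp add: swap_A_def)
    then show ?thesis using True by (simp add: motion_def sigma_w_def)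
  next
    case False
    then have "swap_A i = i" by (auto simp: swap_A_def Sw_def)
    then show ?thesis using False by (simp add: motion_def sigma_w_def)
  qed
qed

lemma cyclic_list_shift: "N > 0 \<Longrightarrow> cyclic_list shift [0..<N]"
  unfolding cyclic_list_def by (auto simp: shift_def)

lemma shift_cyclic: "is_cyclic shift Hw"
proof (cases "N = 0")
  case False
  then show ?thesis using cyclic_list.is_cyclic[OF cyclic_list_shift] by simp
qed (simp add: is_cyclic_def)

lemma covered_map_model: "covered_map Hw sigma_w bar_pos 0 Sw"
proof -
  interpret premap Hw sigma_w bar_pos Sw by (rule premap_model)
  have motion_cyclic: "is_cyclic \<theta> Hw" using shift_cyclic motion_model by simp
  have "is_cyclic (restr \<theta> Sw) Sw"
  proof (cases "Sw = {}")
    case False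
    then have N: "N > 0" using S_subset by auto
    have "filter (\<lambda>x. x \<in> Sw) [0..<N] \<noteq> []" using False S_subset by (auto simp: filter_empty_conv)
    then have "is_cyclic (restr shift Sw) (set (filter (\<lambda>x. x \<in> Sw) [0..<N]))"
      using cyclic_list.is_cyclic[OF cyclic_list_filter[OF cyclic_list_shift[OF N]]] by blast
    moreover have "set (filter (\<lambda>x. x \<in> Sw) [0..<N]) = Sw" using S_subset by auto
    ultimately show ?thesis using motion_model by simp
  qed (simp add: is_cyclic_def)
  then have face_cyclic: "is_cyclic (face_perm (restr sigma_w Sw) (restr bar_pos Sw)) Sw"
    by (rule face_restr_cyclic_if_restr_motion_cyclic)
  have "transitive_on (restr sigma_w Sw) (restr bar_pos Sw) Sw"
    by (rule transitive_on_if_face_cyclic[OF face_cyclic])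
      (use restr_a_S a_S restr_permutes_mem[OF s_permutes finite_H] in auto)
  moreover have "is_map Hw sigma_w bar_pos 0"
    unfolding is_map_def
    using transitive_on_if_motion_cyclic[OF motion_cyclic] sigma_w_permutes bar_pos_permutes a_fpf_involution
    by auto
  ultimately show ?thesis
    unfolding covered_map_def using S_subset a_S connecting_if_motion_cyclic[OF motion_cyclic] face_cyclic
    by auto
qed

lemma length_filter_isA: "length (filter isA w) = 2 * k"
  using alphabet.ucode_length[OF alphabet_A] code_shuffle unfolding code_shuffle_def by blast

lemma length_filter_isB: "length (filter isB w) = 2 * l"
  using alphabet.ucode_length[OF alphabet_B] code_shuffle unfolding code_shuffle_def by blast

lemma card_Hw: "card Hw = 2 * (k + l)"
proof -
  have "filter isB w = filter (\<lambda>x. \<not> isA x) w" by (rule filter_cong) (simp_all add: isB_iff_not_isA)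
  then have "N = length (filter isA w) + length (filter isB w)" using sum_length_filter_compl[of isA w] by simp
  then show ?thesis using length_filter_isA length_filter_isB by simp
qed

lemma card_Sw: "card Sw = 2 * k"
  using length_filter_isA length_filter_conv_card[of isA w] unfolding Sw_def by simp

lemma covered_code_model: "covered_code Hw sigma_w bar_pos 0 Sw w"
  unfolding covered_code_def
proof (intro conjI exI[of _ "nth w"])
  have "card (Hw - Sw) = 2 * l" using card_Diff_subset[of Sw Hw] card_Hw card_Sw by (simp add: Sw_def subset_iff)
  then show "code_shuffle (card Sw div 2) (card (Hw - Sw) div 2) w" using code_shuffle card_Sw by simp
  show "bij_betw (nth w) Hw (set w)"
    unfolding bij_betw_def using inj_on_nth[OF distinct_w, of Hw] by (auto simp: set_conv_nth)
  show "\<forall>h\<in>Hw. isA (w ! h) = (h \<in> Sw)" by (simp add: Sw_def)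
  show "\<forall>h\<in>Hw. w ! bar_pos h = bar (w ! h)" using nth_bar_pos by simp
  show "\<forall>h\<in>Hw. \<forall>i<length w. w ! h = w ! i \<longrightarrow> w ! motion sigma_w bar_pos Sw h = w ! (Suc i mod length w)"
  proof (intro ballI allI impI)
    fix h i assume h: "h \<in> Hw" and i: "i < length w" and "w ! h = w ! i"
    then have "h = i" using distinct_w nth_eq_iff_index_eq by auto
    then show "w ! motion sigma_w bar_pos Sw h = w ! (Suc i mod length w)"
      using motion_model h by (simp add: shift_def)
  qed
qed simp

end

lemma code_shuffle_is_code:
  assumes "code_shuffle k l w"
  shows "\<exists>(H::nat set) s a r S. covered_map H s a r S \<and> card H = 2 * (k + l)
          \<and> card S = 2 * k \<and> covered_code H s a r S w"
proof -
  interpret code_shuffle_model k l w using assms by unfold_locales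
  show ?thesis using covered_map_model card_Hw card_Sw covered_code_model by blast
qed


lemma covered_code_code_shuffle:
  "covered_code H s a r S w \<Longrightarrow> code_shuffle (card S div 2) (card (H - S) div 2) w \<and> length w = card H"
  using covered_code_length by (simp add: covered_code_def)

lemma covered_code_empty:
  assumes "H = {}" "S = {}" shows "covered_code H s a r S w \<longleftrightarrow> w = []"
  using covered_code_length[of H s a r S w] assms
  by (auto simp: covered_code_def code_shuffle_def ucode_def bij_betw_def)

lemma nonempty_covered_map_intro:
  "covered_map H s a r S \<Longrightarrow> H \<noteq> {} \<Longrightarrow> nonempty_covered_map H s a S r"
  unfolding nonempty_covered_map_def nonempty_covered_map_axioms_def by (simp add: covered_map_premap)

theorem covered_code_ex1:
  assumes cm: "covered_map H s a r S" shows "\<exists>!w. covered_code H s a r S w"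
proof (cases "H = {}")
  case True
  then have "S = {}" using cm by (auto simp: covered_map_def)
  then show ?thesis unfolding covered_code_empty[OF True \<open>S = {}\<close>] by simp
next
  case False
  interpret nonempty_covered_map H s a S r using nonempty_covered_map_intro[OF cm False] .
  show ?thesis using covered_code_code_word covered_code_unique by blast
qed

theorem covered_code_restrictions:
  assumes cm: "covered_map H s a r S" and cc: "covered_code H s a r S w"
  shows "umap_code LA LAb S (restr s S) (restr a S) (first_in s S r) (filter isA w)"
    "umap_code LB LBb (H - S) (restr (face_perm s a) (H - S)) (restr a (H - S))
       (first_in (face_perm s a) (H - S) r) (filter isB w)"
proof -
  have "umap_code LA LAb S (restr s S) (restr a S) (first_in s S r) (filter isA w)
    \<and> umap_code LB LBb (H - S) (restr (face_perm s a) (H - S)) (restr a (H - S))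
       (first_in (face_perm s a) (H - S) r) (filter isB w)"
  proof (cases "H = {}")
    case True
    moreover have "S = {}" using True cm by (auto simp: covered_map_def)
    moreover have "w = []" using cc unfolding covered_code_empty[OF True \<open>S = {}\<close>] .
    ultimately show ?thesis by (simp add: umap_code_def ucode_def bij_betw_def)
  next
    case False
    interpret nonempty_covered_map H s a S r using nonempty_covered_map_intro[OF cm False] .
    show ?thesis using umap_code_restr_S[OF cc] umap_code_restr_compl[OF cc] by simp
  qed
  then show "umap_code LA LAb S (restr s S) (restr a S) (first_in s S r) (filter isA w)"
    "umap_code LB LBb (H - S) (restr (face_perm s a) (H - S)) (restr a (H - S))
       (first_in (face_perm s a) (H - S) r) (filter isB w)" by simp_all
qed

theorem mainTheorem8:
  shows
   "(\<forall>(H::'a set) s a r S. covered_map H s a r S \<longrightarrow>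
       (\<exists>!w. covered_code H s a r S w)
       \<and> (\<forall>w. covered_code H s a r S w \<longrightarrow>
              code_shuffle (card S div 2) (card (H - S) div 2) w \<and> length w = card H))
   \<and> (\<forall>(H::'a set) s a r S (H'::'b set) s' a' r' S' w.
       covered_map H s a r S \<and> covered_map H' s' a' r' S'
       \<and> covered_code H s a r S w \<and> covered_code H' s' a' r' S' w
       \<longrightarrow> iso_covered H s a r S H' s' a' r' S')
   \<and> (\<forall>k l w. code_shuffle k l w \<longrightarrow>
       (\<exists>(H::nat set) s a r S. covered_map H s a r S \<and> card H = 2 * (k + l)
          \<and> card S = 2 * k \<and> covered_code H s a r S w))
   \<and> (\<forall>(H::'a set) s a r S w. covered_map H s a r S \<and> covered_code H s a r S w \<longrightarrow>
       umap_code LA LAb S (restr s S) (restr a S) (first_in s S r) (filter isA w)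
       \<and> umap_code LB LBb (H - S) (restr (face_perm s a) (H - S)) (restr a (H - S))
            (first_in (face_perm s a) (H - S) r) (filter isB w))"
  by (intro conjI allI impI; (elim conjE)?; (erule code_shuffle_is_code)?)
    (simp_all add: covered_code_ex1 covered_code_code_shuffle covered_code_iso covered_code_restrictions)

end
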